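(* Let $G$ be the central product of normal subgroups $H,K$ ($G=HK$, $[H,K]=1$), $A=H\cap K$, $Z=H'\cap K'$, and $D$ a divisible abelian group with trivial action. Let $L$ be the kernel of the inflation map $\operatorname{H}^2(H/A,D)\to\operatorname{H}^2(H/Z,D)$ and $M$ the kernel of the inflation map $\operatorname{H}^2(K/A,D)\to\operatorname{H}^2(K/Z,D)$ (so $L\cong\operatorname{Hom}((A\cap H')/Z,D)$ and $M\cong\operatorname{Hom}((A\cap K')/Z,D)$). Then $\operatorname{Hom}(Z,D)$ embeds in $\operatorname{H}^2(H/A,D)/L\oplus\operatorname{H}^2(K/A,D)/M$.
   Context: $X'$ is the commutator subgroup of $X$; $\operatorname{H}^2(X,D)$ is second cohomology with trivial coefficients. *)

theory Defs
  imports "HOL-Algebra.Algebra"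
begin

text \<open>Second cohomology with trivial coefficients, via normalised-free (inhomogeneous)
  2-cochains. The abelian group D is written multiplicatively (HOL-Algebra convention).\<close>

definition cochain2 :: "('q, 'm) monoid_scheme \<Rightarrow> ('d, 'n) monoid_scheme \<Rightarrow> ('q \<times> 'q \<Rightarrow> 'd) monoid" where
  "cochain2 Q D =
     \<lparr> carrier = carrier Q \<times> carrier Q \<rightarrow>\<^sub>E carrier D,
       monoid.mult = (\<lambda>f g. \<lambda>p\<in>carrier Q \<times> carrier Q. f p \<otimes>\<^bsub>D\<^esub> g p),
       monoid.one = (\<lambda>p\<in>carrier Q \<times> carrier Q. \<one>\<^bsub>D\<^esub>) \<rparr>"

definition cocycles2 :: "('q, 'm) monoid_scheme \<Rightarrow> ('d, 'n) monoid_scheme \<Rightarrow> ('q \<times> 'q \<Rightarrow> 'd) set" where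
  "cocycles2 Q D = {f \<in> carrier (cochain2 Q D).
     \<forall>x\<in>carrier Q. \<forall>y\<in>carrier Q. \<forall>z\<in>carrier Q.
       f (y, z) \<otimes>\<^bsub>D\<^esub> f (x, y \<otimes>\<^bsub>Q\<^esub> z) = f (x \<otimes>\<^bsub>Q\<^esub> y, z) \<otimes>\<^bsub>D\<^esub> f (x, y)}"

definition coboundaries2 :: "('q, 'm) monoid_scheme \<Rightarrow> ('d, 'n) monoid_scheme \<Rightarrow> ('q \<times> 'q \<Rightarrow> 'd) set" where
  "coboundaries2 Q D = {(\<lambda>p\<in>carrier Q \<times> carrier Q.
       g (fst p) \<otimes>\<^bsub>D\<^esub> g (snd p) \<otimes>\<^bsub>D\<^esub> inv\<^bsub>D\<^esub> (g (fst p \<otimes>\<^bsub>Q\<^esub> snd p))) | g. g \<in> carrier Q \<rightarrow> carrier D}"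

definition H2 :: "('q, 'm) monoid_scheme \<Rightarrow> ('d, 'n) monoid_scheme \<Rightarrow> (('q \<times> 'q \<Rightarrow> 'd) set) monoid" where
  "H2 Q D = (cochain2 Q D \<lparr>carrier := cocycles2 Q D\<rparr>) Mod coboundaries2 Q D"

definition inflation :: "('q1 \<Rightarrow> 'q2) \<Rightarrow> ('q1, 'm) monoid_scheme \<Rightarrow> ('d, 'n) monoid_scheme
    \<Rightarrow> ('q2 \<times> 'q2 \<Rightarrow> 'd) set \<Rightarrow> ('q1 \<times> 'q1 \<Rightarrow> 'd) set" where
  "inflation phi Q1 D c =
     coboundaries2 Q1 D <#>\<^bsub>cochain2 Q1 D\<^esub>
       ((\<lambda>f. \<lambda>p\<in>carrier Q1 \<times> carrier Q1. f (phi (fst p), phi (snd p))) ` c)"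

definition divisible_group :: "('d, 'n) monoid_scheme \<Rightarrow> bool" where
  "divisible_group D \<longleftrightarrow> (\<forall>x\<in>carrier D. \<forall>n::nat. n > 0 \<longrightarrow> (\<exists>y\<in>carrier D. y [^]\<^bsub>D\<^esub> n = x))"

definition Hom_grp :: "('a, 'm) monoid_scheme \<Rightarrow> 'a set \<Rightarrow> ('d, 'n) monoid_scheme \<Rightarrow> ('a \<Rightarrow> 'd) monoid" where
  "Hom_grp G S D =
     \<lparr> carrier = hom (G\<lparr>carrier := S\<rparr>) D \<inter> extensional S,
       monoid.mult = (\<lambda>f g. \<lambda>x\<in>S. f x \<otimes>\<^bsub>D\<^esub> g x),
       monoid.one = (\<lambda>x\<in>S. \<one>\<^bsub>D\<^esub>) \<rparr>"

text \<open>The quotient map H/Z \<rightarrow> H/A for Z \<subseteq> A: coset C \<mapsto> A C.\<close>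
definition coset_proj :: "('a, 'm) monoid_scheme \<Rightarrow> 'a set \<Rightarrow> 'a set \<Rightarrow> 'a set" where
  "coset_proj G A C = A <#>\<^bsub>G\<^esub> C"

definition infl_kernel :: "('a, 'm) monoid_scheme \<Rightarrow> 'a set \<Rightarrow> 'a set \<Rightarrow> 'a set \<Rightarrow> ('d, 'n) monoid_scheme
   \<Rightarrow> (('a set \<times> 'a set \<Rightarrow> 'd) set) set" where
  "infl_kernel G S A Z D =
     {c \<in> carrier (H2 (G\<lparr>carrier := S\<rparr> Mod A) D).
        inflation (coset_proj G A) (G\<lparr>carrier := S\<rparr> Mod Z) D c
          = \<one>\<^bsub>H2 (G\<lparr>carrier := S\<rparr> Mod Z) D\<^esub>}"

end

theory Submission
  imports Defs
begin

text \<open>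
  Let S be H or K and write A = H \<inter> K, which is central in S. Choosing coset representatives of
  A in S gives an A-valued factor set of S/A, and composing it with a homomorphism
  \<theta> : A \<rightarrow> D gives the transgression class of \<theta> in H^2(S/A, D). Inflated all the way to S this
  class becomes the coboundary of h \<mapsto> \<theta>(a(h)), where a(h) is the A-component of h. Hence if
  it already dies in H^2(S/Z, D), say as the coboundary of g, then h \<mapsto> \<theta>(a(h)) g(hZ) is a
  homomorphism S \<rightarrow> D; it kills S' \<supseteq> Z and agrees with \<theta> on Z up to a constant, so \<theta> is
  trivial on Z. Conversely, if \<theta> is trivial on Z then h \<mapsto> \<theta>(a(h)) is constant on Z-cosets and
  exhibits the inflated class as a coboundary. Thus \<theta> \<mapsto> transgression of \<theta> modulo L is a
  homomorphism Hom(A, D) \<rightarrow> H^2(S/A, D)/L whose fibres are those of restriction to Z. As D is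
  divisible, restriction Hom(A, D) \<rightarrow> Hom(Z, D) is onto, so extending characters of Z to A and
  transgressing into both factors embeds Hom(Z, D).
\<close>

lemma hom_on_subgroupD:
  assumes "group W" "group D" "subgroup B W" "psi \<in> hom (W\<lparr>carrier := B\<rparr>) D"
  shows "\<And>a. a \<in> B \<Longrightarrow> psi a \<in> carrier D"
    and "\<And>a b. a \<in> B \<Longrightarrow> b \<in> B \<Longrightarrow> psi (a \<otimes>\<^bsub>W\<^esub> b) = psi a \<otimes>\<^bsub>D\<^esub> psi b"
    and "psi \<one>\<^bsub>W\<^esub> = \<one>\<^bsub>D\<^esub>"
    and "\<And>a. a \<in> B \<Longrightarrow> psi (inv\<^bsub>W\<^esub> a) = inv\<^bsub>D\<^esub> psi a"
    and "\<And>a (k::int). a \<in> B \<Longrightarrow> psi (a [^]\<^bsub>W\<^esub> k) = psi a [^]\<^bsub>D\<^esub> k"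
proof -
  interpret W: group W by fact
  interpret h: group_hom "W\<lparr>carrier := B\<rparr>" D psi
    using assms W.subgroup_imp_group by (simp add: group_hom_def group_hom_axioms_def)
  show "\<And>a. a \<in> B \<Longrightarrow> psi a \<in> carrier D"
    and "\<And>a b. a \<in> B \<Longrightarrow> b \<in> B \<Longrightarrow> psi (a \<otimes>\<^bsub>W\<^esub> b) = psi a \<otimes>\<^bsub>D\<^esub> psi b"
    using h.hom_closed h.hom_mult by auto
  show "psi \<one>\<^bsub>W\<^esub> = \<one>\<^bsub>D\<^esub>" using h.hom_one by simp
  show "\<And>a. a \<in> B \<Longrightarrow> psi (inv\<^bsub>W\<^esub> a) = inv\<^bsub>D\<^esub> psi a"
    using h.hom_inv W.m_inv_consistent[OF assms(3)] by fastforce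
  show "\<And>a (k::int). a \<in> B \<Longrightarrow> psi (a [^]\<^bsub>W\<^esub> k) = psi a [^]\<^bsub>D\<^esub> k"
    using h.hom_int_pow W.int_pow_consistent[OF assms(3)] by fastforce
qed

lemma hom_derived_eq_one:
  assumes "group W" "comm_group D" "subgroup S W" "psi \<in> hom (W\<lparr>carrier := S\<rparr>) D"
    and "x \<in> derived W S"
  shows "psi x = \<one>\<^bsub>D\<^esub>"
proof -
  interpret W: group W by fact
  interpret D: comm_group D by fact
  interpret h: group_hom "W\<lparr>carrier := S\<rparr>" D psi
    using assms W.subgroup_imp_group by (simp add: group_hom_def group_hom_axioms_def)
  have "psi ` derived (W\<lparr>carrier := S\<rparr>) S = derived D (psi ` S)"
    using h.derived_img by simp
  also have "\<dots> = {\<one>\<^bsub>D\<^esub>}"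
    using h.hom_closed by (intro D.derived_eq_singleton) auto
  finally show ?thesis
    using assms(5) W.derived_consistent[OF subset_refl assms(3)] by blast
qed

lemma (in comm_group) hom_group_div:
  assumes "f \<in> hom H G" "g \<in> hom H G"
  shows "(\<lambda>x. f x \<otimes> inv g x) \<in> hom H G"
  using assms by (auto simp: hom_def Pi_def m_ac inv_mult)

lemma (in normal) int_pow_mem_iff_dvd_ord:
  assumes "x \<in> carrier G"
  shows "x [^] (k::int) \<in> H \<longleftrightarrow> int (group.ord (G Mod H) (H #> x)) dvd k"
proof -
  interpret Q: group "G Mod H" by (rule factorgroup_is_group)
  have "(H #> x) [^]\<^bsub>G Mod H\<^esub> k = H #> (x [^] k)"
    using hom_int_pow[OF r_coset_hom_Mod assms is_group Q.is_group] by simp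
  moreover have "H #> y = H \<longleftrightarrow> y \<in> H" if "y \<in> carrier G" for y
    using coset_join1[OF _ that subgroup_axioms] coset_join2[OF that subgroup_axioms] by blast
  ultimately show ?thesis
    using Q.int_pow_eq_id[of "H #> x" k] assms by (simp add: carrier_FactGroup RCOSETS_def)
qed

lemma (in comm_group) inv_cancel_ac:
  shows "\<lbrakk>x \<in> carrier G; y \<in> carrier G\<rbrakk> \<Longrightarrow> x \<otimes> (inv x \<otimes> y) = y"
    and "\<lbrakk>x \<in> carrier G; y \<in> carrier G\<rbrakk> \<Longrightarrow> inv x \<otimes> (x \<otimes> y) = y"
    and "\<lbrakk>x \<in> carrier G; y \<in> carrier G\<rbrakk> \<Longrightarrow> x \<otimes> (y \<otimes> inv x) = y"
    and "\<lbrakk>x \<in> carrier G; y \<in> carrier G\<rbrakk> \<Longrightarrow> inv x \<otimes> (y \<otimes> x) = y"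
    and "\<lbrakk>x \<in> carrier G; y \<in> carrier G; z \<in> carrier G\<rbrakk> \<Longrightarrow> x \<otimes> (y \<otimes> (inv x \<otimes> z)) = y \<otimes> z"
    and "\<lbrakk>x \<in> carrier G; y \<in> carrier G; z \<in> carrier G\<rbrakk> \<Longrightarrow> inv x \<otimes> (y \<otimes> (x \<otimes> z)) = y \<otimes> z"
  by (simp_all add: m_assoc[symmetric] m_comm[of y] m_lcomm[of y])

lemma set_mult_image_rcos:
  assumes G1: "group G1" and G2: "group G2" and h: "h \<in> hom G1 G2" and K: "subgroup K G1"
    and N: "subgroup N G2" and hK: "h ` K \<subseteq> N" and f: "f \<in> carrier G1"
  shows "N <#>\<^bsub>G2\<^esub> (h ` (K #>\<^bsub>G1\<^esub> f)) = N #>\<^bsub>G2\<^esub> h f"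
proof -
  interpret G1: group G1 by fact
  interpret G2: group G2 by fact
  interpret hh: group_hom G1 G2 h using h by (simp add: group_hom_def group_hom_axioms_def G1.is_group G2.is_group)
  show ?thesis
  proof (intro equalityI subsetI)
    fix y assume "y \<in> N <#>\<^bsub>G2\<^esub> (h ` (K #>\<^bsub>G1\<^esub> f))"
    then obtain n k where nk: "n \<in> N" "k \<in> K" "y = n \<otimes>\<^bsub>G2\<^esub> h (k \<otimes>\<^bsub>G1\<^esub> f)"
      unfolding set_mult_def r_coset_def by auto
    have kc: "k \<in> carrier G1" using nk(2) subgroup.mem_carrier[OF K] by simp
    have nc: "n \<in> carrier G2" using nk(1) subgroup.mem_carrier[OF N] by simp
    have hk: "h k \<in> N" using hK nk(2) by blast
    have "y = (n \<otimes>\<^bsub>G2\<^esub> h k) \<otimes>\<^bsub>G2\<^esub> h f" using nk(3) kc f nc by (simp add: G2.m_assoc)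
    moreover have "n \<otimes>\<^bsub>G2\<^esub> h k \<in> N" using subgroup.m_closed[OF N nk(1) hk] .
    ultimately show "y \<in> N #>\<^bsub>G2\<^esub> h f" unfolding r_coset_def by blast
  next
    fix y assume "y \<in> N #>\<^bsub>G2\<^esub> h f"
    then obtain n where n: "n \<in> N" "y = n \<otimes>\<^bsub>G2\<^esub> h f" unfolding r_coset_def by blast
    have "\<one>\<^bsub>G1\<^esub> \<otimes>\<^bsub>G1\<^esub> f \<in> K #>\<^bsub>G1\<^esub> f" unfolding r_coset_def using subgroup.one_closed[OF K] by blast
    moreover have "y = n \<otimes>\<^bsub>G2\<^esub> h (\<one>\<^bsub>G1\<^esub> \<otimes>\<^bsub>G1\<^esub> f)" using n f by simp
    ultimately show "y \<in> N <#>\<^bsub>G2\<^esub> (h ` (K #>\<^bsub>G1\<^esub> f))" unfolding set_mult_def using n(1) by blast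
  qed
qed

lemma (in group) rcos_eq_iff:
  assumes "subgroup H G" "x \<in> carrier G" "y \<in> carrier G"
  shows "H #> x = H #> y \<longleftrightarrow> x \<otimes> inv y \<in> H"
  using repr_independenceD[OF assms(1,2)] repr_independence[OF _ assms(3,1)]
    subgroup.rcos_module[OF assms(1) is_group assms(3,2)] by metis

lemma r_coset_update: "r_coset (G\<lparr>carrier := S\<rparr>) = r_coset G"
  by (auto simp: r_coset_def fun_eq_iff)

lemma set_mult_update: "set_mult (G\<lparr>carrier := S\<rparr>) = set_mult G"
  by (simp add: set_mult_def fun_eq_iff)

section \<open>Homomorphisms into a divisible group extend\<close>

text \<open>The value at x of an extension of psi: x^k \<in> B forces k to be a multiple of the
  order n of x modulo B, and d is an n-th root of psi(x^n).\<close>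
lemma divisible_root_at_element:
  assumes W: "comm_group W" and D: "comm_group D" "divisible_group D"
    and B: "subgroup B W" and psi: "psi \<in> hom (W\<lparr>carrier := B\<rparr>) D" and x: "x \<in> carrier W"
  shows "\<exists>d\<in>carrier D. \<forall>k::int. x [^]\<^bsub>W\<^esub> k \<in> B \<longrightarrow> d [^]\<^bsub>D\<^esub> k = psi (x [^]\<^bsub>W\<^esub> k)"
proof -
  interpret W: comm_group W by fact
  interpret D: comm_group D by fact
  interpret B: normal B W by (rule W.subgroup_imp_normal[OF B])
  note psi_simps = hom_on_subgroupD[OF W.is_group D.is_group B psi]
  define n where "n = group.ord (W Mod B) (B #>\<^bsub>W\<^esub> x)"
  have mem: "x [^]\<^bsub>W\<^esub> k \<in> B \<longleftrightarrow> int n dvd k" for k :: int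
    unfolding n_def by (rule B.int_pow_mem_iff_dvd_ord[OF x])
  obtain d where d: "d \<in> carrier D" "d [^]\<^bsub>D\<^esub> (int n) = psi (x [^]\<^bsub>W\<^esub> (int n))"
  proof (cases "n = 0")
    case True
    then show ?thesis using that[of "\<one>\<^bsub>D\<^esub>"] psi_simps(3) by simp
  next
    case False
    have "psi (x [^]\<^bsub>W\<^esub> (int n)) \<in> carrier D" using psi_simps(1) mem[of "int n"] by simp
    then obtain d where "d \<in> carrier D" "d [^]\<^bsub>D\<^esub> n = psi (x [^]\<^bsub>W\<^esub> (int n))"
      using D(2) False unfolding divisible_group_def by blast
    then show ?thesis using that by (simp add: int_pow_int)
  qed
  have "d [^]\<^bsub>D\<^esub> k = psi (x [^]\<^bsub>W\<^esub> k)" if xk: "x [^]\<^bsub>W\<^esub> k \<in> B" for k :: int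
  proof -
    obtain q where k: "k = int n * q" using xk unfolding mem by (elim dvdE)
    have "d [^]\<^bsub>D\<^esub> k = psi (x [^]\<^bsub>W\<^esub> (int n)) [^]\<^bsub>D\<^esub> q"
      using d by (simp add: k D.int_pow_pow[symmetric])
    also have "\<dots> = psi (x [^]\<^bsub>W\<^esub> k)"
      using psi_simps(5)[of "x [^]\<^bsub>W\<^esub> (int n)" q] mem[of "int n"] x by (simp add: k W.int_pow_pow)
    finally show ?thesis .
  qed
  then show ?thesis using d(1) by blast
qed

lemma (in comm_group) subgroup_adjoin:
  assumes B: "subgroup B G" and x: "x \<in> carrier G"
  shows "subgroup {b \<otimes> x [^] (k::int) | b k. b \<in> B} G" (is "subgroup ?B' G")
    and "B \<subseteq> {b \<otimes> x [^] (k::int) | b k. b \<in> B}"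
    and "x \<in> {b \<otimes> x [^] (k::int) | b k. b \<in> B}"
proof -
  have Bc: "\<And>b. b \<in> B \<Longrightarrow> b \<in> carrier G" using subgroup.mem_carrier[OF B] .
  have "b = b \<otimes> x [^] (0::int)" if "b \<in> B" for b using that Bc by simp
  then show B_sub: "B \<subseteq> ?B'" by blast
  have "x = \<one> \<otimes> x [^] (1::int)" using x by simp
  then show "x \<in> ?B'" using subgroup.one_closed[OF B] by blast
  show "subgroup ?B' G"
  proof (rule subgroupI)
    show "?B' \<subseteq> carrier G" using Bc x by auto
    show "?B' \<noteq> {}" using B_sub subgroup.one_closed[OF B] by blast
    show "inv a \<in> ?B'" if a: "a \<in> ?B'" for a
    proof -
      obtain b k where "a = b \<otimes> x [^] (k::int)" "b \<in> B" using a by blast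
      then have "inv a = inv b \<otimes> x [^] (- k)" "inv b \<in> B"
        using Bc x subgroup.m_inv_closed[OF B] by (simp_all add: inv_mult int_pow_neg)
      then show ?thesis by blast
    qed
    show "a \<otimes> c \<in> ?B'" if ac: "a \<in> ?B'" "c \<in> ?B'" for a c
    proof -
      obtain b1 k1 b2 k2 where "a = b1 \<otimes> x [^] (k1::int)" "b1 \<in> B" "c = b2 \<otimes> x [^] (k2::int)" "b2 \<in> B"
        using ac by blast
      then have "a \<otimes> c = (b1 \<otimes> b2) \<otimes> x [^] (k1 + k2)" "b1 \<otimes> b2 \<in> B"
        using Bc x subgroup.m_closed[OF B] by (simp_all add: int_pow_mult m_ac)
      then show ?thesis by blast
    qed
  qed
qed

lemma adjoin_extension_well_defined:
  assumes W: "comm_group W" and D: "comm_group D"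
    and B: "subgroup B W" and psi: "psi \<in> hom (W\<lparr>carrier := B\<rparr>) D" and x: "x \<in> carrier W"
    and d: "d \<in> carrier D" "\<And>k::int. x [^]\<^bsub>W\<^esub> k \<in> B \<Longrightarrow> d [^]\<^bsub>D\<^esub> k = psi (x [^]\<^bsub>W\<^esub> k)"
    and b: "b1 \<in> B" "b2 \<in> B"
    and eq: "b1 \<otimes>\<^bsub>W\<^esub> x [^]\<^bsub>W\<^esub> (k1::int) = b2 \<otimes>\<^bsub>W\<^esub> x [^]\<^bsub>W\<^esub> (k2::int)"
  shows "psi b1 \<otimes>\<^bsub>D\<^esub> d [^]\<^bsub>D\<^esub> k1 = psi b2 \<otimes>\<^bsub>D\<^esub> d [^]\<^bsub>D\<^esub> k2"
proof -
  interpret W: comm_group W by fact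
  interpret D: comm_group D by fact
  note psi_simps = hom_on_subgroupD[OF W.is_group D.is_group B psi]
  have c: "b1 \<in> carrier W" "b2 \<in> carrier W" using b subgroup.mem_carrier[OF B] by auto
  have "inv\<^bsub>W\<^esub> b1 \<otimes>\<^bsub>W\<^esub> b2
      = inv\<^bsub>W\<^esub> b1 \<otimes>\<^bsub>W\<^esub> (b2 \<otimes>\<^bsub>W\<^esub> x [^]\<^bsub>W\<^esub> k2) \<otimes>\<^bsub>W\<^esub> inv\<^bsub>W\<^esub> (x [^]\<^bsub>W\<^esub> k2)"
    using c x by (simp add: W.m_assoc)
  also have "\<dots> = x [^]\<^bsub>W\<^esub> (k1 - k2)"
    unfolding eq[symmetric] using c x by (simp add: W.m_assoc[symmetric] W.int_pow_diff)
  finally have e: "inv\<^bsub>W\<^esub> b1 \<otimes>\<^bsub>W\<^esub> b2 = x [^]\<^bsub>W\<^esub> (k1 - k2)" .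
  have "inv\<^bsub>W\<^esub> b1 \<otimes>\<^bsub>W\<^esub> b2 \<in> B"
    using b subgroup.m_closed[OF B] subgroup.m_inv_closed[OF B] by blast
  then have "d [^]\<^bsub>D\<^esub> (k1 - k2) = inv\<^bsub>D\<^esub> psi b1 \<otimes>\<^bsub>D\<^esub> psi b2"
    using d(2)[of "k1 - k2"] psi_simps(2,4) b subgroup.m_inv_closed[OF B] by (simp flip: e)
  then have "psi b1 \<otimes>\<^bsub>D\<^esub> d [^]\<^bsub>D\<^esub> k1
      = psi b1 \<otimes>\<^bsub>D\<^esub> (inv\<^bsub>D\<^esub> psi b1 \<otimes>\<^bsub>D\<^esub> psi b2) \<otimes>\<^bsub>D\<^esub> d [^]\<^bsub>D\<^esub> k2"
    using D.int_pow_mult[OF d(1), of "k1 - k2" k2] d(1) psi_simps(1) b by (simp add: D.m_assoc)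
  also have "\<dots> = psi b2 \<otimes>\<^bsub>D\<^esub> d [^]\<^bsub>D\<^esub> k2"
    using d(1) psi_simps(1) b by (simp add: D.m_assoc[symmetric])
  finally show ?thesis .
qed

lemma divisible_hom_extend_step:
  assumes W: "comm_group W" and D: "comm_group D" "divisible_group D"
    and B: "subgroup B W" and psi: "psi \<in> hom (W\<lparr>carrier := B\<rparr>) D" and x: "x \<in> carrier W"
  shows "\<exists>psi'. psi' \<in> hom (W\<lparr>carrier := {b \<otimes>\<^bsub>W\<^esub> x [^]\<^bsub>W\<^esub> (k::int) | b k. b \<in> B}\<rparr>) D
            \<and> (\<forall>b\<in>B. psi' b = psi b)"
proof -
  interpret W: comm_group W by fact
  interpret D: comm_group D by fact
  note psi_simps = hom_on_subgroupD[OF W.is_group D.is_group B psi]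
  have Bc: "\<And>b. b \<in> B \<Longrightarrow> b \<in> carrier W" using subgroup.mem_carrier[OF B] .
  obtain d where d: "d \<in> carrier D" "\<And>k::int. x [^]\<^bsub>W\<^esub> k \<in> B \<Longrightarrow> d [^]\<^bsub>D\<^esub> k = psi (x [^]\<^bsub>W\<^esub> k)"
    using divisible_root_at_element[OF assms] by blast
  define psi' where "psi' y = (SOME v. \<exists>b\<in>B. \<exists>k::int. y = b \<otimes>\<^bsub>W\<^esub> x [^]\<^bsub>W\<^esub> k
      \<and> v = psi b \<otimes>\<^bsub>D\<^esub> d [^]\<^bsub>D\<^esub> k)" for y
  have psi'_eq: "psi' (b \<otimes>\<^bsub>W\<^esub> x [^]\<^bsub>W\<^esub> k) = psi b \<otimes>\<^bsub>D\<^esub> d [^]\<^bsub>D\<^esub> k" if "b \<in> B" for b and k :: int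
  proof -
    have "\<exists>b'\<in>B. \<exists>k'::int. b \<otimes>\<^bsub>W\<^esub> x [^]\<^bsub>W\<^esub> k = b' \<otimes>\<^bsub>W\<^esub> x [^]\<^bsub>W\<^esub> k'
        \<and> psi' (b \<otimes>\<^bsub>W\<^esub> x [^]\<^bsub>W\<^esub> k) = psi b' \<otimes>\<^bsub>D\<^esub> d [^]\<^bsub>D\<^esub> k'"
      unfolding psi'_def by (rule someI_ex) (use that in blast)
    then show ?thesis using adjoin_extension_well_defined[OF W D(1) B psi x d] that by metis
  qed
  have "psi' \<in> hom (W\<lparr>carrier := {b \<otimes>\<^bsub>W\<^esub> x [^]\<^bsub>W\<^esub> (k::int) | b k. b \<in> B}\<rparr>) D"
  proof (rule homI)
    fix a assume "a \<in> carrier (W\<lparr>carrier := {b \<otimes>\<^bsub>W\<^esub> x [^]\<^bsub>W\<^esub> (k::int) | b k. b \<in> B}\<rparr>)"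
    then obtain b k where "a = b \<otimes>\<^bsub>W\<^esub> x [^]\<^bsub>W\<^esub> (k::int)" "b \<in> B" by auto
    then show "psi' a \<in> carrier D" using psi'_eq psi_simps(1) d(1) by simp
  next
    fix a c
    assume "a \<in> carrier (W\<lparr>carrier := {b \<otimes>\<^bsub>W\<^esub> x [^]\<^bsub>W\<^esub> (k::int) | b k. b \<in> B}\<rparr>)"
      and "c \<in> carrier (W\<lparr>carrier := {b \<otimes>\<^bsub>W\<^esub> x [^]\<^bsub>W\<^esub> (k::int) | b k. b \<in> B}\<rparr>)"
    then obtain b1 k1 b2 k2 where a: "a = b1 \<otimes>\<^bsub>W\<^esub> x [^]\<^bsub>W\<^esub> (k1::int)" "b1 \<in> B"
      and c: "c = b2 \<otimes>\<^bsub>W\<^esub> x [^]\<^bsub>W\<^esub> (k2::int)" "b2 \<in> B" by auto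
    have "a \<otimes>\<^bsub>W\<^esub> c = (b1 \<otimes>\<^bsub>W\<^esub> b2) \<otimes>\<^bsub>W\<^esub> x [^]\<^bsub>W\<^esub> (k1 + k2)"
      using a c Bc x by (simp add: W.int_pow_mult W.m_ac)
    then have "psi' (a \<otimes>\<^bsub>W\<^esub> c) = psi (b1 \<otimes>\<^bsub>W\<^esub> b2) \<otimes>\<^bsub>D\<^esub> d [^]\<^bsub>D\<^esub> (k1 + k2)"
      using a c psi'_eq subgroup.m_closed[OF B] by simp
    also have "\<dots> = psi' a \<otimes>\<^bsub>D\<^esub> psi' c"
      using a c psi'_eq psi_simps(1,2) d(1) by (simp add: D.int_pow_mult D.m_ac)
    finally show "psi' (a \<otimes>\<^bsub>W\<lparr>carrier := {b \<otimes>\<^bsub>W\<^esub> x [^]\<^bsub>W\<^esub> (k::int) | b k. b \<in> B}\<rparr>\<^esub> c)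
        = psi' a \<otimes>\<^bsub>D\<^esub> psi' c" by simp
  qed
  moreover have "psi' b = psi b" if "b \<in> B" for b
    using psi'_eq[OF that, of 0] that Bc psi_simps(1) by simp
  ultimately show ?thesis by blast
qed

definition graph_on :: "'a set \<Rightarrow> ('a \<Rightarrow> 'b) \<Rightarrow> ('a \<times> 'b) set" where
  "graph_on B f = (\<lambda>b. (b, f b)) ` B"

lemma mem_graph_on_iff [simp]: "(b, d) \<in> graph_on B f \<longleftrightarrow> b \<in> B \<and> d = f b"
  unfolding graph_on_def by auto

definition hom_graphs :: "('a, 'm) monoid_scheme \<Rightarrow> ('d, 'n) monoid_scheme \<Rightarrow> ('a \<times> 'd) set set" where
  "hom_graphs W D = {graph_on B f | B f. subgroup B W \<and> f \<in> hom (W\<lparr>carrier := B\<rparr>) D}"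

lemma chain_graphs_common_member:
  assumes C: "C \<in> chains {graph_on B f | B f. P B f}" and ab: "(a, da) \<in> \<Union>C" "(b, db) \<in> \<Union>C"
  shows "\<exists>B f. graph_on B f \<in> C \<and> P B f \<and> a \<in> B \<and> b \<in> B \<and> da = f a \<and> db = f b"
proof -
  obtain R1 R2 where R: "R1 \<in> C" "R2 \<in> C" "(a, da) \<in> R1" "(b, db) \<in> R2" using ab by blast
  then have "R1 \<subseteq> R2 \<or> R2 \<subseteq> R1" using chainsD[OF C] by blast
  moreover have "\<exists>B f. R = graph_on B f \<and> P B f" if "R \<in> C" for R
    using that chainsD2[OF C] by blast
  ultimately show ?thesis using R by (metis mem_graph_on_iff subsetD)
qed

lemma chain_graphs_Union_eq:
  assumes C: "C \<in> chains {graph_on B f | B f. P B f}"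
  shows "\<Union>C = graph_on (Domain (\<Union>C)) (\<lambda>b. THE d. (b, d) \<in> \<Union>C)"
proof -
  have "(THE d. (b, d) \<in> \<Union>C) = d" if "(b, d) \<in> \<Union>C" for b d
  proof (rule the_equality)
    show "(b, d) \<in> \<Union>C" by fact
    show "e = d" if "(b, e) \<in> \<Union>C" for e
      using chain_graphs_common_member[OF C \<open>(b, d) \<in> \<Union>C\<close> that] by auto
  qed
  then show ?thesis by (auto simp: graph_on_def image_iff Domain.simps)
qed

lemma chain_hom_graphs_Union:
  assumes W: "group W" and C: "C \<in> chains (hom_graphs W D)" and ne: "C \<noteq> {}"
  shows "\<Union>C \<in> hom_graphs W D"
proof -
  interpret W: group W by fact
  define BB where "BB = Domain (\<Union>C)"
  define ff where "ff b = (THE d. (b, d) \<in> \<Union>C)" for b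
  have Union_eq: "\<Union>C = graph_on BB ff"
    unfolding BB_def ff_def by (rule chain_graphs_Union_eq[OF C[unfolded hom_graphs_def]])
  have common: "\<exists>B f. graph_on B f \<in> C \<and> subgroup B W \<and> f \<in> hom (W\<lparr>carrier := B\<rparr>) D
      \<and> a \<in> B \<and> b \<in> B \<and> ff a = f a \<and> ff b = f b"
    if "a \<in> BB" "b \<in> BB" for a b
    using chain_graphs_common_member[of C, OF C[unfolded hom_graphs_def], of a "ff a" b "ff b"] that
    unfolding Union_eq by auto
  have mem_BB: "b \<in> BB" "ff b = f b" if "graph_on B f \<in> C" "b \<in> B" for B f b
    using that Union_eq by (metis Union_upper mem_graph_on_iff subsetD)+
  have "subgroup BB W"
  proof (rule W.subgroupI)
    show "BB \<subseteq> carrier W"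
    proof
      fix a assume a: "a \<in> BB"
      obtain B f where "subgroup B W" "a \<in> B" using common[OF a a] by blast
      then show "a \<in> carrier W" by (rule subgroup.mem_carrier)
    qed
    obtain R where "R \<in> C" using ne by blast
    then obtain B f where B: "graph_on B f \<in> C" "subgroup B W"
      using chainsD2[OF C] unfolding hom_graphs_def by blast
    have "\<one>\<^bsub>W\<^esub> \<in> BB" by (rule mem_BB(1)[OF B(1) subgroup.one_closed[OF B(2)]])
    then show "BB \<noteq> {}" by blast
    show "inv\<^bsub>W\<^esub> a \<in> BB" if a: "a \<in> BB" for a
    proof -
      obtain B f where B: "graph_on B f \<in> C" "subgroup B W" "a \<in> B" using common[OF a a] by blast
      show ?thesis by (rule mem_BB(1)[OF B(1) subgroup.m_inv_closed[OF B(2,3)]])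
    qed
    show "a \<otimes>\<^bsub>W\<^esub> b \<in> BB" if ab: "a \<in> BB" "b \<in> BB" for a b
    proof -
      obtain B f where B: "graph_on B f \<in> C" "subgroup B W" "a \<in> B" "b \<in> B"
        using common[OF ab] by blast
      show ?thesis by (rule mem_BB(1)[OF B(1) subgroup.m_closed[OF B(2-4)]])
    qed
  qed
  moreover have "ff \<in> hom (W\<lparr>carrier := BB\<rparr>) D"
  proof (rule homI)
    show "ff a \<in> carrier D" if "a \<in> carrier (W\<lparr>carrier := BB\<rparr>)" for a
      using common[of a a] that by (auto simp: hom_def)
    show "ff (a \<otimes>\<^bsub>W\<lparr>carrier := BB\<rparr>\<^esub> b) = ff a \<otimes>\<^bsub>D\<^esub> ff b"
      if ab: "a \<in> carrier (W\<lparr>carrier := BB\<rparr>)" "b \<in> carrier (W\<lparr>carrier := BB\<rparr>)" for a b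
    proof -
      obtain B f where Bf: "graph_on B f \<in> C" "subgroup B W" "f \<in> hom (W\<lparr>carrier := B\<rparr>) D"
        "a \<in> B" "b \<in> B" "ff a = f a" "ff b = f b"
        using common[of a b] ab by auto
      then show ?thesis using mem_BB(2)[OF Bf(1)] subgroup.m_closed[OF Bf(2)] by (auto simp: hom_def)
    qed
  qed
  ultimately show ?thesis unfolding Union_eq hom_graphs_def by blast
qed

lemma divisible_hom_extension:
  assumes W: "comm_group W" and Z: "subgroup Z W" and D: "comm_group D" "divisible_group D"
    and chi: "chi \<in> hom (W\<lparr>carrier := Z\<rparr>) D"
  shows "\<exists>psi \<in> hom W D. \<forall>z\<in>Z. psi z = chi z"
proof -
  interpret W: comm_group W by fact
  define F where "F = {R \<in> hom_graphs W D. graph_on Z chi \<subseteq> R}"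
  have chain_bound: "\<exists>U\<in>F. \<forall>R\<in>C. R \<subseteq> U" if C: "C \<in> chains F" for C
  proof (cases "C = {}")
    case True
    have "graph_on Z chi \<in> F" unfolding F_def hom_graphs_def using Z chi by blast
    then show ?thesis using True by blast
  next
    case False
    then obtain R where R: "R \<in> C" by blast
    have CF: "C \<subseteq> F" using chainsD2[OF C] .
    have "C \<in> chains (hom_graphs W D)"
      using C CF unfolding F_def chains_def chain_subset_def by blast
    then have "\<Union>C \<in> hom_graphs W D" by (rule chain_hom_graphs_Union[OF W.is_group _ False])
    moreover have "graph_on Z chi \<subseteq> \<Union>C" using R CF unfolding F_def by blast
    ultimately have "\<Union>C \<in> F" unfolding F_def by blast
    then show ?thesis by blast
  qed
  obtain M where M: "M \<in> F" "\<forall>R\<in>F. M \<subseteq> R \<longrightarrow> R = M"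
    using Zorn_Lemma2[OF ballI[OF chain_bound]] by blast
  obtain B f where Bf: "M = graph_on B f" "subgroup B W" "f \<in> hom (W\<lparr>carrier := B\<rparr>) D"
    "graph_on Z chi \<subseteq> graph_on B f"
    using M(1) unfolding F_def hom_graphs_def by blast
  have "B = carrier W"
  proof (rule ccontr)
    assume "B \<noteq> carrier W"
    then obtain x where x: "x \<in> carrier W" "x \<notin> B" using subgroup.subset[OF Bf(2)] by blast
    define B' where "B' = {b \<otimes>\<^bsub>W\<^esub> x [^]\<^bsub>W\<^esub> (k::int) | b k. b \<in> B}"
    obtain f' where f': "f' \<in> hom (W\<lparr>carrier := B'\<rparr>) D" "\<forall>b\<in>B. f' b = f b"
      using divisible_hom_extend_step[OF W D Bf(2,3) x(1)] unfolding B'_def by blast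
    have B': "subgroup B' W" "B \<subseteq> B'" "x \<in> B'"
      unfolding B'_def using W.subgroup_adjoin[OF Bf(2) x(1)] by auto
    have "M \<subseteq> graph_on B' f'" using Bf(1) B'(2) f'(2) by auto
    moreover have "graph_on B' f' \<in> F"
      unfolding F_def hom_graphs_def using B'(1) f'(1) Bf(4) calculation Bf(1) by blast
    ultimately have "graph_on B' f' = M" using M(2) by blast
    then have "(x, f' x) \<in> graph_on B f" using Bf(1) B'(3) by (metis mem_graph_on_iff)
    then show False using x(2) by simp
  qed
  moreover have "f z = chi z" if "z \<in> Z" for z
    using Bf(4) that by (metis mem_graph_on_iff subsetD)
  ultimately show ?thesis using Bf(3) by auto
qed

lemma divisible_hom_extension_map:
  assumes "comm_group W" "subgroup Z W" "comm_group D" "divisible_group D"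
  obtains ext where "\<And>\<chi>. \<chi> \<in> hom (W\<lparr>carrier := Z\<rparr>) D \<Longrightarrow> ext \<chi> \<in> hom W D"
    and "\<And>\<chi> z. \<chi> \<in> hom (W\<lparr>carrier := Z\<rparr>) D \<Longrightarrow> z \<in> Z \<Longrightarrow> ext \<chi> z = \<chi> z"
proof -
  have "\<forall>\<chi>\<in>hom (W\<lparr>carrier := Z\<rparr>) D. \<exists>\<psi>. \<psi> \<in> hom W D \<and> (\<forall>z\<in>Z. \<psi> z = \<chi> z)"
    using divisible_hom_extension[OF assms] by blast
  then show ?thesis using that by metis
qed

section \<open>Second cohomology with trivial coefficients\<close>

lemma cochain2_comm_group:
  assumes D: "comm_group D"
  shows "comm_group (cochain2 Q D)"
proof -
  interpret D: comm_group D by fact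
  let ?S = "carrier Q \<times> carrier Q"
  show ?thesis
  proof (rule comm_groupI)
    fix f g assume "f \<in> carrier (cochain2 Q D)" "g \<in> carrier (cochain2 Q D)"
    then show "f \<otimes>\<^bsub>cochain2 Q D\<^esub> g \<in> carrier (cochain2 Q D)"
      by (auto simp: cochain2_def PiE_iff)
  next
    show "\<one>\<^bsub>cochain2 Q D\<^esub> \<in> carrier (cochain2 Q D)" by (auto simp: cochain2_def PiE_iff)
  next
    fix f g h assume "f \<in> carrier (cochain2 Q D)" "g \<in> carrier (cochain2 Q D)" "h \<in> carrier (cochain2 Q D)"
    then show "f \<otimes>\<^bsub>cochain2 Q D\<^esub> g \<otimes>\<^bsub>cochain2 Q D\<^esub> h = f \<otimes>\<^bsub>cochain2 Q D\<^esub> (g \<otimes>\<^bsub>cochain2 Q D\<^esub> h)"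
      by (auto simp: cochain2_def PiE_iff D.m_assoc intro!: restrict_ext)
  next
    fix f g assume "f \<in> carrier (cochain2 Q D)" "g \<in> carrier (cochain2 Q D)"
    then show "f \<otimes>\<^bsub>cochain2 Q D\<^esub> g = g \<otimes>\<^bsub>cochain2 Q D\<^esub> f"
      by (auto simp: cochain2_def PiE_iff D.m_comm intro!: restrict_ext)
  next
    fix f assume "f \<in> carrier (cochain2 Q D)"
    then show "\<one>\<^bsub>cochain2 Q D\<^esub> \<otimes>\<^bsub>cochain2 Q D\<^esub> f = f"
      by (auto simp: cochain2_def PiE_iff extensional_def fun_eq_iff)
  next
    fix f assume f: "f \<in> carrier (cochain2 Q D)"
    show "\<exists>y\<in>carrier (cochain2 Q D). y \<otimes>\<^bsub>cochain2 Q D\<^esub> f = \<one>\<^bsub>cochain2 Q D\<^esub>"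
    proof (intro bexI)
      show "(\<lambda>p\<in>?S. inv\<^bsub>D\<^esub> (f p)) \<in> carrier (cochain2 Q D)" using f by (auto simp: cochain2_def PiE_iff)
      show "(\<lambda>p\<in>?S. inv\<^bsub>D\<^esub> (f p)) \<otimes>\<^bsub>cochain2 Q D\<^esub> f = \<one>\<^bsub>cochain2 Q D\<^esub>"
        using f by (auto simp: cochain2_def PiE_iff intro!: restrict_ext)
    qed
  qed
qed

lemma inv_cochain2:
  assumes D: "comm_group D" and f: "f \<in> carrier (cochain2 Q D)"
  shows "inv\<^bsub>cochain2 Q D\<^esub> f = (\<lambda>p\<in>carrier Q \<times> carrier Q. inv\<^bsub>D\<^esub> (f p))"
proof -
  interpret D: comm_group D by fact
  interpret C: comm_group "cochain2 Q D" by (rule cochain2_comm_group[OF D])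
  show ?thesis
  proof (rule C.inv_equality)
    show "(\<lambda>p\<in>carrier Q \<times> carrier Q. inv\<^bsub>D\<^esub> (f p)) \<in> carrier (cochain2 Q D)" using f by (auto simp: cochain2_def PiE_iff)
    show "(\<lambda>p\<in>carrier Q \<times> carrier Q. inv\<^bsub>D\<^esub> (f p)) \<otimes>\<^bsub>cochain2 Q D\<^esub> f = \<one>\<^bsub>cochain2 Q D\<^esub>"
      using f by (auto simp: cochain2_def PiE_iff intro!: restrict_ext)
  qed (rule f)
qed

lemma mult_cochain2: "f \<otimes>\<^bsub>cochain2 Q D\<^esub> g = (\<lambda>p\<in>carrier Q \<times> carrier Q. f p \<otimes>\<^bsub>D\<^esub> g p)"
  by (simp add: cochain2_def)
lemma one_cochain2: "\<one>\<^bsub>cochain2 Q D\<^esub> = (\<lambda>p\<in>carrier Q \<times> carrier Q. \<one>\<^bsub>D\<^esub>)"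
  by (simp add: cochain2_def)
lemma carrier_cochain2: "carrier (cochain2 Q D) = carrier Q \<times> carrier Q \<rightarrow>\<^sub>E carrier D"
  by (simp add: cochain2_def)

lemma cocycles2_subgroup:
  assumes Q: "group Q" and D: "comm_group D"
  shows "subgroup (cocycles2 Q D) (cochain2 Q D)"
proof -
  interpret Q: group Q by fact
  interpret D: comm_group D by fact
  interpret C: comm_group "cochain2 Q D" by (rule cochain2_comm_group[OF D])
  let ?S = "carrier Q \<times> carrier Q"
  have fc: "f p \<in> carrier D" if "f \<in> carrier (cochain2 Q D)" "p \<in> ?S" for f p
    using that by (auto simp: cochain2_def PiE_iff)
  show ?thesis
  proof (rule C.subgroupI)
    show "cocycles2 Q D \<subseteq> carrier (cochain2 Q D)" unfolding cocycles2_def by blast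
    have "\<one>\<^bsub>cochain2 Q D\<^esub> \<in> cocycles2 Q D"
      unfolding cocycles2_def by (auto simp: one_cochain2 carrier_cochain2 PiE_iff)
    then show "cocycles2 Q D \<noteq> {}" by blast
  next
    fix f assume f: "f \<in> cocycles2 Q D"
    then have fC: "f \<in> carrier (cochain2 Q D)" unfolding cocycles2_def by blast
    show "inv\<^bsub>cochain2 Q D\<^esub> f \<in> cocycles2 Q D"
      unfolding cocycles2_def
    proof (intro CollectI conjI ballI)
      show "inv\<^bsub>cochain2 Q D\<^esub> f \<in> carrier (cochain2 Q D)" using fC by simp
      fix x y z assume xyz: "x \<in> carrier Q" "y \<in> carrier Q" "z \<in> carrier Q"
      have e: "f (y, z) \<otimes>\<^bsub>D\<^esub> f (x, y \<otimes>\<^bsub>Q\<^esub> z) = f (x \<otimes>\<^bsub>Q\<^esub> y, z) \<otimes>\<^bsub>D\<^esub> f (x, y)"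
        using f xyz unfolding cocycles2_def by blast
      have c: "f (y, z) \<in> carrier D" "f (x, y \<otimes>\<^bsub>Q\<^esub> z) \<in> carrier D" "f (x \<otimes>\<^bsub>Q\<^esub> y, z) \<in> carrier D" "f (x, y) \<in> carrier D"
        using fc[OF fC] xyz by auto
      have "inv\<^bsub>D\<^esub> (f (y, z)) \<otimes>\<^bsub>D\<^esub> inv\<^bsub>D\<^esub> (f (x, y \<otimes>\<^bsub>Q\<^esub> z)) = inv\<^bsub>D\<^esub> (f (x \<otimes>\<^bsub>Q\<^esub> y, z)) \<otimes>\<^bsub>D\<^esub> inv\<^bsub>D\<^esub> (f (x, y))"
        using e c by (metis D.inv_mult)
      then show "(inv\<^bsub>cochain2 Q D\<^esub> f) (y, z) \<otimes>\<^bsub>D\<^esub> (inv\<^bsub>cochain2 Q D\<^esub> f) (x, y \<otimes>\<^bsub>Q\<^esub> z) =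
          (inv\<^bsub>cochain2 Q D\<^esub> f) (x \<otimes>\<^bsub>Q\<^esub> y, z) \<otimes>\<^bsub>D\<^esub> (inv\<^bsub>cochain2 Q D\<^esub> f) (x, y)"
        using xyz by (simp add: inv_cochain2[OF D fC])
    qed
  next
    fix f g assume f: "f \<in> cocycles2 Q D" and g: "g \<in> cocycles2 Q D"
    then have fC: "f \<in> carrier (cochain2 Q D)" and gC: "g \<in> carrier (cochain2 Q D)" unfolding cocycles2_def by blast+
    show "f \<otimes>\<^bsub>cochain2 Q D\<^esub> g \<in> cocycles2 Q D"
      unfolding cocycles2_def
    proof (intro CollectI conjI ballI)
      show "f \<otimes>\<^bsub>cochain2 Q D\<^esub> g \<in> carrier (cochain2 Q D)" using fC gC by simp
      fix x y z assume xyz: "x \<in> carrier Q" "y \<in> carrier Q" "z \<in> carrier Q"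
      have e: "f (y, z) \<otimes>\<^bsub>D\<^esub> f (x, y \<otimes>\<^bsub>Q\<^esub> z) = f (x \<otimes>\<^bsub>Q\<^esub> y, z) \<otimes>\<^bsub>D\<^esub> f (x, y)"
        using f xyz unfolding cocycles2_def by blast
      have e2: "g (y, z) \<otimes>\<^bsub>D\<^esub> g (x, y \<otimes>\<^bsub>Q\<^esub> z) = g (x \<otimes>\<^bsub>Q\<^esub> y, z) \<otimes>\<^bsub>D\<^esub> g (x, y)"
        using g xyz unfolding cocycles2_def by blast
      have c: "f (y, z) \<in> carrier D" "f (x, y \<otimes>\<^bsub>Q\<^esub> z) \<in> carrier D" "f (x \<otimes>\<^bsub>Q\<^esub> y, z) \<in> carrier D" "f (x, y) \<in> carrier D"
        "g (y, z) \<in> carrier D" "g (x, y \<otimes>\<^bsub>Q\<^esub> z) \<in> carrier D" "g (x \<otimes>\<^bsub>Q\<^esub> y, z) \<in> carrier D" "g (x, y) \<in> carrier D"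
        using fc[OF fC] fc[OF gC] xyz by auto
      have "(f (y, z) \<otimes>\<^bsub>D\<^esub> g (y, z)) \<otimes>\<^bsub>D\<^esub> (f (x, y \<otimes>\<^bsub>Q\<^esub> z) \<otimes>\<^bsub>D\<^esub> g (x, y \<otimes>\<^bsub>Q\<^esub> z))
          = (f (y, z) \<otimes>\<^bsub>D\<^esub> f (x, y \<otimes>\<^bsub>Q\<^esub> z)) \<otimes>\<^bsub>D\<^esub> (g (y, z) \<otimes>\<^bsub>D\<^esub> g (x, y \<otimes>\<^bsub>Q\<^esub> z))"
        using c by (simp add: D.m_ac)
      also have "\<dots> = (f (x \<otimes>\<^bsub>Q\<^esub> y, z) \<otimes>\<^bsub>D\<^esub> f (x, y)) \<otimes>\<^bsub>D\<^esub> (g (x \<otimes>\<^bsub>Q\<^esub> y, z) \<otimes>\<^bsub>D\<^esub> g (x, y))"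
        using e e2 by simp
      also have "\<dots> = (f (x \<otimes>\<^bsub>Q\<^esub> y, z) \<otimes>\<^bsub>D\<^esub> g (x \<otimes>\<^bsub>Q\<^esub> y, z)) \<otimes>\<^bsub>D\<^esub> (f (x, y) \<otimes>\<^bsub>D\<^esub> g (x, y))"
        using c by (simp add: D.m_ac)
      finally show "(f \<otimes>\<^bsub>cochain2 Q D\<^esub> g) (y, z) \<otimes>\<^bsub>D\<^esub> (f \<otimes>\<^bsub>cochain2 Q D\<^esub> g) (x, y \<otimes>\<^bsub>Q\<^esub> z) =
          (f \<otimes>\<^bsub>cochain2 Q D\<^esub> g) (x \<otimes>\<^bsub>Q\<^esub> y, z) \<otimes>\<^bsub>D\<^esub> (f \<otimes>\<^bsub>cochain2 Q D\<^esub> g) (x, y)"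
        using xyz by (simp add: mult_cochain2)
    qed
  qed
qed

definition coboundary2 :: "('q, 'm) monoid_scheme \<Rightarrow> ('d, 'n) monoid_scheme \<Rightarrow> ('q \<Rightarrow> 'd) \<Rightarrow> ('q \<times> 'q \<Rightarrow> 'd)" where
  "coboundary2 Q D g = (\<lambda>p\<in>carrier Q \<times> carrier Q. g (fst p) \<otimes>\<^bsub>D\<^esub> g (snd p) \<otimes>\<^bsub>D\<^esub> inv\<^bsub>D\<^esub> (g (fst p \<otimes>\<^bsub>Q\<^esub> snd p)))"

lemma coboundaries2_eq: "coboundaries2 Q D = {coboundary2 Q D g | g. g \<in> carrier Q \<rightarrow> carrier D}"
  unfolding coboundaries2_def coboundary2_def by simp

lemma coboundaries2_subgroup:
  assumes Q: "group Q" and D: "comm_group D"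
  shows "subgroup (coboundaries2 Q D) (cochain2 Q D)" and "coboundaries2 Q D \<subseteq> cocycles2 Q D"
proof -
  interpret Q: group Q by fact
  interpret D: comm_group D by fact
  interpret C: comm_group "cochain2 Q D" by (rule cochain2_comm_group[OF D])
  have cobC: "coboundary2 Q D g \<in> carrier (cochain2 Q D)" if "g \<in> carrier Q \<rightarrow> carrier D" for g
    using that by (auto simp: coboundary2_def cochain2_def PiE_iff)
  show "coboundaries2 Q D \<subseteq> cocycles2 Q D"
  proof
    fix f assume "f \<in> coboundaries2 Q D"
    then obtain g where g: "g \<in> carrier Q \<rightarrow> carrier D" "f = coboundary2 Q D g" unfolding coboundaries2_eq by blast
    show "f \<in> cocycles2 Q D"
      unfolding cocycles2_def
    proof (intro CollectI conjI ballI)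
      show "f \<in> carrier (cochain2 Q D)" using cobC g by simp
      fix x y z assume xyz: "x \<in> carrier Q" "y \<in> carrier Q" "z \<in> carrier Q"
      have c: "g x \<in> carrier D" "g y \<in> carrier D" "g z \<in> carrier D" "g (x \<otimes>\<^bsub>Q\<^esub> y) \<in> carrier D"
         "g (y \<otimes>\<^bsub>Q\<^esub> z) \<in> carrier D" "g (x \<otimes>\<^bsub>Q\<^esub> (y \<otimes>\<^bsub>Q\<^esub> z)) \<in> carrier D"
        using g(1) xyz by auto
      have a: "x \<otimes>\<^bsub>Q\<^esub> y \<otimes>\<^bsub>Q\<^esub> z = x \<otimes>\<^bsub>Q\<^esub> (y \<otimes>\<^bsub>Q\<^esub> z)" using xyz Q.m_assoc by blast
      show "f (y, z) \<otimes>\<^bsub>D\<^esub> f (x, y \<otimes>\<^bsub>Q\<^esub> z) = f (x \<otimes>\<^bsub>Q\<^esub> y, z) \<otimes>\<^bsub>D\<^esub> f (x, y)"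
        using xyz c a by (simp add: g(2) coboundary2_def D.m_ac D.inv_cancel_ac)
    qed
  qed
  show "subgroup (coboundaries2 Q D) (cochain2 Q D)"
  proof (rule C.subgroupI)
    show "coboundaries2 Q D \<subseteq> carrier (cochain2 Q D)" using cobC unfolding coboundaries2_eq by blast
    have "coboundary2 Q D (\<lambda>_. \<one>\<^bsub>D\<^esub>) \<in> coboundaries2 Q D" unfolding coboundaries2_eq by auto
    then show "coboundaries2 Q D \<noteq> {}" by blast
  next
    fix f assume "f \<in> coboundaries2 Q D"
    then obtain g where g: "g \<in> carrier Q \<rightarrow> carrier D" "f = coboundary2 Q D g" unfolding coboundaries2_eq by blast
    have ig: "(\<lambda>q. inv\<^bsub>D\<^esub> (g q)) \<in> carrier Q \<rightarrow> carrier D" using g(1) by auto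
    have "inv\<^bsub>cochain2 Q D\<^esub> f = coboundary2 Q D (\<lambda>q. inv\<^bsub>D\<^esub> (g q))"
      unfolding inv_cochain2[OF D cobC[OF g(1), folded g(2)]]
      using g by (auto simp: coboundary2_def D.inv_mult Pi_iff intro!: restrict_ext)
    then show "inv\<^bsub>cochain2 Q D\<^esub> f \<in> coboundaries2 Q D" unfolding coboundaries2_eq using ig by blast
  next
    fix f h assume "f \<in> coboundaries2 Q D" "h \<in> coboundaries2 Q D"
    then obtain g g' where g: "g \<in> carrier Q \<rightarrow> carrier D" "f = coboundary2 Q D g"
      and g': "g' \<in> carrier Q \<rightarrow> carrier D" "h = coboundary2 Q D g'" unfolding coboundaries2_eq by blast
    have gg: "(\<lambda>q. g q \<otimes>\<^bsub>D\<^esub> g' q) \<in> carrier Q \<rightarrow> carrier D" using g(1) g'(1) by auto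
    have "f \<otimes>\<^bsub>cochain2 Q D\<^esub> h = coboundary2 Q D (\<lambda>q. g q \<otimes>\<^bsub>D\<^esub> g' q)"
      using g g' by (auto simp: coboundary2_def mult_cochain2 D.inv_mult D.m_ac Pi_iff intro!: restrict_ext)
    then show "f \<otimes>\<^bsub>cochain2 Q D\<^esub> h \<in> coboundaries2 Q D" unfolding coboundaries2_eq using gg by blast
  qed
qed

locale trivial_action = Q: group Q + D: comm_group D
  for Q :: "('q, 'm) monoid_scheme" and D :: "('d, 'n) monoid_scheme"
begin

abbreviation "C2 \<equiv> cochain2 Q D"
abbreviation "Z2 \<equiv> cocycles2 Q D"
abbreviation "B2 \<equiv> coboundaries2 Q D"
abbreviation "cocycle_group \<equiv> C2\<lparr>carrier := Z2\<rparr>"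

lemma cochains_comm_group: "comm_group C2"
  by (rule cochain2_comm_group[OF D.comm_group_axioms])

lemma cochains_group: "group C2"
  using cochains_comm_group comm_group.axioms(2) by blast

lemma cocycles_subgroup: "subgroup Z2 C2"
  by (rule cocycles2_subgroup[OF Q.is_group D.comm_group_axioms])

lemma coboundaries_subgroup: "subgroup B2 C2"
  by (rule coboundaries2_subgroup(1)[OF Q.is_group D.comm_group_axioms])

lemma cocycle_group_comm: "comm_group cocycle_group"
proof -
  interpret C: comm_group C2 by (rule cochains_comm_group)
  have "group cocycle_group" using C.subgroup_imp_group[OF cocycles_subgroup] .
  then show ?thesis
    by (rule group.group_comm_groupI) (use subgroup.mem_carrier[OF cocycles_subgroup] C.m_comm in auto)
qed

lemma coboundaries_normal: "B2 \<lhd> cocycle_group"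
  using group.subgroup_incl[OF cochains_group coboundaries_subgroup cocycles_subgroup
      coboundaries2_subgroup(2)[OF Q.is_group D.comm_group_axioms]]
  by (rule comm_group.subgroup_imp_normal[OF cocycle_group_comm])

lemma H2_comm_group: "comm_group (H2 Q D)"
  unfolding H2_def using comm_group.abelian_FactGroup[OF cocycle_group_comm]
    normal_imp_subgroup[OF coboundaries_normal] .

lemma H2_group: "group (H2 Q D)"
  using H2_comm_group comm_group.axioms(2) by blast

lemma carrier_H2: "carrier (H2 Q D) = (\<lambda>f. B2 #>\<^bsub>C2\<^esub> f) ` Z2"
  unfolding H2_def carrier_FactGroup r_coset_update by simp

lemma one_H2: "\<one>\<^bsub>H2 Q D\<^esub> = B2"
  unfolding H2_def by simp

lemma mult_H2:
  assumes "f \<in> Z2" "g \<in> Z2"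
  shows "(B2 #>\<^bsub>C2\<^esub> f) \<otimes>\<^bsub>H2 Q D\<^esub> (B2 #>\<^bsub>C2\<^esub> g) = B2 #>\<^bsub>C2\<^esub> (f \<otimes>\<^bsub>C2\<^esub> g)"
  using normal.rcos_sum[OF coboundaries_normal, of f g] assms
  unfolding H2_def r_coset_update set_mult_update by simp

lemma inv_H2:
  assumes "f \<in> Z2"
  shows "inv\<^bsub>H2 Q D\<^esub> (B2 #>\<^bsub>C2\<^esub> f) = B2 #>\<^bsub>C2\<^esub> (inv\<^bsub>C2\<^esub> f)"
proof -
  have "B2 #>\<^bsub>cocycle_group\<^esub> f \<in> carrier (cocycle_group Mod B2)"
    using assms by (simp add: carrier_FactGroup)
  then have "inv\<^bsub>cocycle_group Mod B2\<^esub> (B2 #>\<^bsub>cocycle_group\<^esub> f) = set_inv\<^bsub>cocycle_group\<^esub> (B2 #>\<^bsub>cocycle_group\<^esub> f)"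
    by (rule normal.inv_FactGroup[OF coboundaries_normal])
  also have "\<dots> = B2 #>\<^bsub>cocycle_group\<^esub> inv\<^bsub>cocycle_group\<^esub> f"
    using normal.rcos_inv[OF coboundaries_normal] assms by simp
  also have "inv\<^bsub>cocycle_group\<^esub> f = inv\<^bsub>C2\<^esub> f"
    using group.m_inv_consistent[OF cochains_group cocycles_subgroup assms] .
  finally show ?thesis unfolding H2_def r_coset_update .
qed

end

section \<open>Transgression along a central subgroup\<close>

definition coset_rep :: "'a set \<Rightarrow> 'a" where
  "coset_rep C = (SOME h. h \<in> C)"

lemma coset_rep_mem: "h \<in> C \<Longrightarrow> coset_rep C \<in> C"
  unfolding coset_rep_def by (rule someI)

locale central_quotient = G: group G + D: comm_group D
  for G :: "('a, 'm) monoid_scheme" (structure) and D :: "('d, 'n) monoid_scheme" +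
  fixes S A Z :: "'a set"
  assumes subgroup_S: "subgroup S G" and subgroup_A: "subgroup A G" and A_subset_S: "A \<subseteq> S"
    and A_central: "\<And>a h. a \<in> A \<Longrightarrow> h \<in> S \<Longrightarrow> a \<otimes> h = h \<otimes> a"
    and subgroup_Z: "subgroup Z G" and Z_subset_A: "Z \<subseteq> A" and Z_subset_derived: "Z \<subseteq> derived G S"
begin

abbreviation "GS \<equiv> G\<lparr>carrier := S\<rparr>"
abbreviation "QA \<equiv> GS Mod A"
abbreviation "QZ \<equiv> GS Mod Z"

lemma S_carrier: "h \<in> S \<Longrightarrow> h \<in> carrier G"
  using subgroup.mem_carrier[OF subgroup_S] .

lemma A_carrier: "a \<in> A \<Longrightarrow> a \<in> carrier G"
  using subgroup.mem_carrier[OF subgroup_A] .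

lemma S_mult: "h1 \<in> S \<Longrightarrow> h2 \<in> S \<Longrightarrow> h1 \<otimes> h2 \<in> S"
  using subgroup.m_closed[OF subgroup_S] .

lemma GS_group: "group GS"
  using G.subgroup_imp_group[OF subgroup_S] .

lemma central_subgroup_normal:
  assumes "subgroup N G" "N \<subseteq> A"
  shows "N \<lhd> GS"
  unfolding group.normal_inv_iff[OF GS_group]
proof (intro conjI ballI)
  show "subgroup N GS" using G.subgroup_incl[OF assms(1) subgroup_S] assms(2) A_subset_S by blast
  show "x \<otimes>\<^bsub>GS\<^esub> n \<otimes>\<^bsub>GS\<^esub> inv\<^bsub>GS\<^esub> x \<in> N" if "x \<in> carrier GS" "n \<in> N" for x n
  proof -
    have "x \<otimes> n = n \<otimes> x" using that assms(2) A_central[of n x] by auto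
    then show ?thesis
      using that assms(2) A_carrier S_carrier G.m_inv_consistent[OF subgroup_S] by (auto simp: G.m_assoc)
  qed
qed

lemma A_normal: "A \<lhd> GS"
  using central_subgroup_normal[OF subgroup_A] by simp

lemma Z_normal: "Z \<lhd> GS"
  using central_subgroup_normal[OF subgroup_Z Z_subset_A] .

lemma QA_group: "group QA"
  using normal.factorgroup_is_group[OF A_normal] .

lemma QZ_group: "group QZ"
  using normal.factorgroup_is_group[OF Z_normal] .

lemma carrier_QA: "carrier QA = (\<lambda>h. A #> h) ` S"
  by (simp add: carrier_FactGroup r_coset_update)

lemma carrier_QZ: "carrier QZ = (\<lambda>h. Z #> h) ` S"
  by (simp add: carrier_FactGroup r_coset_update)

lemma mult_QA: "x \<otimes>\<^bsub>QA\<^esub> y = x <#> y"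
  by (simp add: set_mult_update)

lemma mult_QZ: "x \<otimes>\<^bsub>QZ\<^esub> y = x <#> y"
  by (simp add: set_mult_update)

lemma rcos_mult:
  assumes "N \<lhd> GS" "h1 \<in> S" "h2 \<in> S"
  shows "(N #> h1) <#> (N #> h2) = N #> (h1 \<otimes> h2)"
  using normal.rcos_sum[OF assms(1), of h1 h2] assms(2,3) by (simp add: r_coset_update set_mult_update)

lemma rcos_in_QA: "h \<in> S \<Longrightarrow> A #> h \<in> carrier QA"
  using carrier_QA by auto

lemma rcos_in_QZ: "h \<in> S \<Longrightarrow> Z #> h \<in> carrier QZ"
  using carrier_QZ by auto

lemma rep_rcos_A:
  assumes "h \<in> S"
  shows "coset_rep (A #> h) \<in> S" "A #> coset_rep (A #> h) = A #> h"
proof -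
  have rep: "coset_rep (A #> h) \<in> A #> h"
    using coset_rep_mem[OF G.rcos_self[OF S_carrier[OF assms] subgroup_A]] .
  then show "coset_rep (A #> h) \<in> S"
    using A_subset_S S_mult assms by (auto simp: r_coset_def)
  show "A #> coset_rep (A #> h) = A #> h"
    using G.repr_independence[OF rep S_carrier[OF assms] subgroup_A] by simp
qed

text \<open>Writing h = A_part h \<otimes> coset_rep (A #> h) splits S set-theoretically as A \<times> S/A;
  the failure of coset_rep to be multiplicative is measured by the A-valued factor set.\<close>

definition A_part :: "'a \<Rightarrow> 'a" where
  "A_part h = h \<otimes> inv (coset_rep (A #> h))"

definition factor_set :: "'a set \<Rightarrow> 'a set \<Rightarrow> 'a" where
  "factor_set x y = coset_rep x \<otimes> coset_rep y \<otimes> inv (coset_rep (x <#> y))"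

lemma A_part_mem: "h \<in> S \<Longrightarrow> A_part h \<in> A"
  unfolding A_part_def using G.rcos_eq_iff[OF subgroup_A] rep_rcos_A S_carrier by metis

lemma A_part_mult_rep: "h \<in> S \<Longrightarrow> A_part h \<otimes> coset_rep (A #> h) = h"
  unfolding A_part_def using rep_rcos_A(1) S_carrier by (simp add: G.m_assoc)

lemma A_part_mult_A:
  assumes "a \<in> A" "h \<in> S"
  shows "A_part (a \<otimes> h) = a \<otimes> A_part h"
proof -
  have "A #> (a \<otimes> h) = (A #> a) #> h"
    using G.coset_mult_assoc subgroup.subset[OF subgroup_A] A_carrier S_carrier assms by simp
  also have "A #> a = A" using G.coset_join2[OF A_carrier subgroup_A] assms(1) by simp
  finally show ?thesis
    unfolding A_part_def using rep_rcos_A(1) assms A_carrier S_carrier by (simp add: G.m_assoc)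
qed

lemma factor_set_mem:
  assumes "h1 \<in> S" "h2 \<in> S"
  shows "factor_set (A #> h1) (A #> h2) \<in> A"
proof -
  let ?x = "A #> h1" and ?y = "A #> h2"
  have xy: "?x <#> ?y = A #> (h1 \<otimes> h2)" using rcos_mult[OF A_normal assms] .
  have reps: "coset_rep ?x \<in> S" "coset_rep ?y \<in> S" "coset_rep (A #> (h1 \<otimes> h2)) \<in> S"
    using rep_rcos_A(1) assms S_mult by auto
  have "A #> (coset_rep ?x \<otimes> coset_rep ?y) = ?x <#> ?y"
    using rcos_mult[OF A_normal reps(1,2)] rep_rcos_A(2) assms by simp
  also have "\<dots> = A #> coset_rep (?x <#> ?y)" using xy rep_rcos_A(2) assms S_mult by simp
  finally show ?thesis
    unfolding factor_set_def using G.rcos_eq_iff[OF subgroup_A] reps xy S_carrier G.m_closed by metis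
qed

lemma factor_set_mem_QA: "x \<in> carrier QA \<Longrightarrow> y \<in> carrier QA \<Longrightarrow> factor_set x y \<in> A"
  using carrier_QA factor_set_mem by auto

lemma A_part_mult:
  assumes "h1 \<in> S" "h2 \<in> S"
  shows "A_part (h1 \<otimes> h2) = A_part h1 \<otimes> A_part h2 \<otimes> factor_set (A #> h1) (A #> h2)"
proof -
  let ?x = "A #> h1" and ?y = "A #> h2"
  have xy: "?x <#> ?y = A #> (h1 \<otimes> h2)" using rcos_mult[OF A_normal assms] .
  have c: "coset_rep ?x \<in> carrier G" "coset_rep ?y \<in> carrier G"
    "coset_rep (A #> (h1 \<otimes> h2)) \<in> carrier G" "A_part h1 \<in> carrier G" "A_part h2 \<in> carrier G"
    using rep_rcos_A(1) S_carrier assms S_mult A_part_mem A_carrier by auto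
  have "A_part h1 \<otimes> A_part h2 \<otimes> factor_set ?x ?y
      = A_part h1 \<otimes> (A_part h2 \<otimes> coset_rep ?x) \<otimes> (coset_rep ?y \<otimes> inv (coset_rep (A #> (h1 \<otimes> h2))))"
    unfolding factor_set_def xy using c by (simp add: G.m_assoc)
  also have "A_part h2 \<otimes> coset_rep ?x = coset_rep ?x \<otimes> A_part h2"
    using A_central A_part_mem rep_rcos_A(1) assms by blast
  also have "A_part h1 \<otimes> (coset_rep ?x \<otimes> A_part h2) \<otimes> (coset_rep ?y \<otimes> inv (coset_rep (A #> (h1 \<otimes> h2))))
      = (A_part h1 \<otimes> coset_rep ?x) \<otimes> (A_part h2 \<otimes> coset_rep ?y) \<otimes> inv (coset_rep (A #> (h1 \<otimes> h2)))"
    using c by (simp add: G.m_assoc)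
  also have "\<dots> = A_part (h1 \<otimes> h2)"
    unfolding A_part_def[of "h1 \<otimes> h2"] using A_part_mult_rep assms by simp
  finally show ?thesis by simp
qed

definition transgression_cocycle :: "('a \<Rightarrow> 'd) \<Rightarrow> ('a set \<times> 'a set \<Rightarrow> 'd)" where
  "transgression_cocycle \<theta> = (\<lambda>p\<in>carrier QA \<times> carrier QA. \<theta> (factor_set (fst p) (snd p)))"

lemma transgression_cocycle_cong:
  "(\<And>a. a \<in> A \<Longrightarrow> \<theta>1 a = \<theta>2 a) \<Longrightarrow> transgression_cocycle \<theta>1 = transgression_cocycle \<theta>2"
  unfolding transgression_cocycle_def using factor_set_mem_QA by (auto intro!: restrict_ext)

lemma transgression_cocycle_mult:
  "transgression_cocycle (\<lambda>a. \<theta>1 a \<otimes>\<^bsub>D\<^esub> \<theta>2 a)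
     = transgression_cocycle \<theta>1 \<otimes>\<^bsub>cochain2 QA D\<^esub> transgression_cocycle \<theta>2"
  unfolding transgression_cocycle_def mult_cochain2 by (auto intro!: restrict_ext)

context
  fixes \<theta> assumes \<theta>: "\<theta> \<in> hom (G\<lparr>carrier := A\<rparr>) D"
begin

lemmas \<theta>_simps = hom_on_subgroupD[OF G.is_group D.is_group subgroup_A \<theta>]

lemma transgression_cocycle_closed:
  "x \<in> carrier QA \<Longrightarrow> y \<in> carrier QA \<Longrightarrow> transgression_cocycle \<theta> (x, y) \<in> carrier D"
  unfolding transgression_cocycle_def using \<theta>_simps(1) factor_set_mem_QA by simp

lemma A_part_hom_defect:
  assumes "h1 \<in> S" "h2 \<in> S"
  shows "\<theta> (A_part (h1 \<otimes> h2))
    = \<theta> (A_part h1) \<otimes>\<^bsub>D\<^esub> \<theta> (A_part h2) \<otimes>\<^bsub>D\<^esub> transgression_cocycle \<theta> (A #> h1, A #> h2)"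
  unfolding A_part_mult[OF assms] transgression_cocycle_def
  using \<theta>_simps(2) A_part_mem factor_set_mem assms subgroup.m_closed[OF subgroup_A] rcos_in_QA
  by simp

lemma transgression_cocycle_mem: "transgression_cocycle \<theta> \<in> cocycles2 QA D"
  unfolding cocycles2_def
proof (intro CollectI conjI ballI)
  show "transgression_cocycle \<theta> \<in> carrier (cochain2 QA D)"
    unfolding carrier_cochain2 transgression_cocycle_def using \<theta>_simps(1) factor_set_mem_QA by auto
  let ?F = "\<lambda>h h'. transgression_cocycle \<theta> (A #> h, A #> h')" and ?u = "\<lambda>h. \<theta> (A_part h)"
  fix x y z assume "x \<in> carrier QA" "y \<in> carrier QA" "z \<in> carrier QA"
  then obtain h1 h2 h3 where h: "h1 \<in> S" "h2 \<in> S" "h3 \<in> S" "x = A #> h1" "y = A #> h2" "z = A #> h3"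
    using carrier_QA by auto
  have c: "?u h1 \<in> carrier D" "?u h2 \<in> carrier D" "?u h3 \<in> carrier D"
    "?F h1 h2 \<in> carrier D" "?F h2 h3 \<in> carrier D" "?F (h1 \<otimes> h2) h3 \<in> carrier D"
    "?F h1 (h2 \<otimes> h3) \<in> carrier D"
    using \<theta>_simps(1) A_part_mem transgression_cocycle_closed h rcos_in_QA S_mult by auto
  let ?P = "?u h1 \<otimes>\<^bsub>D\<^esub> ?u h2 \<otimes>\<^bsub>D\<^esub> ?u h3"
  have "?u (h1 \<otimes> h2 \<otimes> h3) = ?P \<otimes>\<^bsub>D\<^esub> (?F h1 h2 \<otimes>\<^bsub>D\<^esub> ?F (h1 \<otimes> h2) h3)"
    using A_part_hom_defect[OF S_mult[OF h(1,2)] h(3)] A_part_hom_defect[OF h(1,2)] c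
    by (simp add: D.m_ac)
  moreover have "h1 \<otimes> h2 \<otimes> h3 = h1 \<otimes> (h2 \<otimes> h3)" using h S_carrier by (simp add: G.m_assoc)
  then have "?u (h1 \<otimes> h2 \<otimes> h3) = ?P \<otimes>\<^bsub>D\<^esub> (?F h2 h3 \<otimes>\<^bsub>D\<^esub> ?F h1 (h2 \<otimes> h3))"
    using A_part_hom_defect[OF h(1) S_mult[OF h(2,3)]] A_part_hom_defect[OF h(2,3)] c
    by (simp add: D.m_ac)
  ultimately have "?F h1 h2 \<otimes>\<^bsub>D\<^esub> ?F (h1 \<otimes> h2) h3 = ?F h2 h3 \<otimes>\<^bsub>D\<^esub> ?F h1 (h2 \<otimes> h3)"
    using c by simp
  then show "transgression_cocycle \<theta> (y, z) \<otimes>\<^bsub>D\<^esub> transgression_cocycle \<theta> (x, y \<otimes>\<^bsub>QA\<^esub> z)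
      = transgression_cocycle \<theta> (x \<otimes>\<^bsub>QA\<^esub> y, z) \<otimes>\<^bsub>D\<^esub> transgression_cocycle \<theta> (x, y)"
    using c by (simp add: h(4-6) mult_QA rcos_mult[OF A_normal] h(1-3) D.m_comm)
qed

end

end

context central_quotient
begin

lemma A_set_mult_Z: "A <#> Z = A"
proof (intro equalityI subsetI)
  show "x \<in> A" if "x \<in> A <#> Z" for x
    using that Z_subset_A subgroup.m_closed[OF subgroup_A] unfolding set_mult_def by blast
  show "x \<in> A <#> Z" if "x \<in> A" for x
    using that A_carrier subgroup.one_closed[OF subgroup_Z] G.r_one[of x]
    unfolding set_mult_def by (metis (no_types, lifting) UN_iff singletonI)
qed

lemma coset_proj_rcos: "h \<in> S \<Longrightarrow> coset_proj G A (Z #> h) = A #> h"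
  unfolding coset_proj_def
  using G.setmult_rcos_assoc[of A Z h] subgroup.subset[OF subgroup_A] subgroup.subset[OF subgroup_Z]
    S_carrier A_set_mult_Z by simp

lemma coset_proj_closed: "x \<in> carrier QZ \<Longrightarrow> coset_proj G A x \<in> carrier QA"
  using carrier_QZ coset_proj_rcos rcos_in_QA by auto

lemma coset_proj_mult:
  assumes "x \<in> carrier QZ" "y \<in> carrier QZ"
  shows "coset_proj G A (x \<otimes>\<^bsub>QZ\<^esub> y) = coset_proj G A x \<otimes>\<^bsub>QA\<^esub> coset_proj G A y"
proof -
  obtain h1 h2 where "h1 \<in> S" "h2 \<in> S" "x = Z #> h1" "y = Z #> h2" using carrier_QZ assms by auto
  then show ?thesis
    using mult_QZ mult_QA rcos_mult[OF Z_normal] rcos_mult[OF A_normal] coset_proj_rcos S_mult by simp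
qed

definition inflate2 :: "('a set \<times> 'a set \<Rightarrow> 'd) \<Rightarrow> ('a set \<times> 'a set \<Rightarrow> 'd)" where
  "inflate2 f = (\<lambda>p\<in>carrier QZ \<times> carrier QZ. f (coset_proj G A (fst p), coset_proj G A (snd p)))"

lemma inflate2_hom: "inflate2 \<in> hom (cochain2 QA D) (cochain2 QZ D)"
proof (rule homI)
  show "inflate2 f \<in> carrier (cochain2 QZ D)" if "f \<in> carrier (cochain2 QA D)" for f
    using that coset_proj_closed unfolding carrier_cochain2 inflate2_def by (auto simp: PiE_iff)
  show "inflate2 (f \<otimes>\<^bsub>cochain2 QA D\<^esub> g) = inflate2 f \<otimes>\<^bsub>cochain2 QZ D\<^esub> inflate2 g" for f g
    unfolding inflate2_def mult_cochain2 using coset_proj_closed by (auto intro!: restrict_ext)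
qed

lemma inflate2_coboundaries: "inflate2 ` coboundaries2 QA D \<subseteq> coboundaries2 QZ D"
proof
  fix f assume "f \<in> inflate2 ` coboundaries2 QA D"
  then obtain g where g: "g \<in> carrier QA \<rightarrow> carrier D" "f = inflate2 (coboundary2 QA D g)"
    unfolding coboundaries2_eq by blast
  have "f = coboundary2 QZ D (\<lambda>x. g (coset_proj G A x))"
    unfolding g(2) inflate2_def coboundary2_def
    using coset_proj_closed coset_proj_mult monoid.m_closed[OF group.is_monoid[OF QZ_group]]
    by (fastforce intro!: restrict_ext)
  moreover have "(\<lambda>x. g (coset_proj G A x)) \<in> carrier QZ \<rightarrow> carrier D"
    using g(1) coset_proj_closed by auto
  ultimately show "f \<in> coboundaries2 QZ D" unfolding coboundaries2_eq by blast
qed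

lemma inflation_rcos:
  assumes "f \<in> carrier (cochain2 QA D)"
  shows "inflation (coset_proj G A) QZ D (coboundaries2 QA D #>\<^bsub>cochain2 QA D\<^esub> f)
       = coboundaries2 QZ D #>\<^bsub>cochain2 QZ D\<^esub> inflate2 f"
proof -
  have e: "(\<lambda>f. \<lambda>p\<in>carrier QZ \<times> carrier QZ. f (coset_proj G A (fst p), coset_proj G A (snd p))) = inflate2"
    unfolding inflate2_def by (rule ext) simp
  show ?thesis
    unfolding inflation_def e
    using set_mult_image_rcos[OF comm_group.axioms(2)[OF cochain2_comm_group[OF D.comm_group_axioms]] comm_group.axioms(2)[OF cochain2_comm_group[OF D.comm_group_axioms]] inflate2_hom
        coboundaries2_subgroup(1)[OF QA_group D.comm_group_axioms]
        coboundaries2_subgroup(1)[OF QZ_group D.comm_group_axioms] inflate2_coboundaries assms] .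
qed

end

context central_quotient
begin

context
  fixes \<theta> assumes \<theta>: "\<theta> \<in> hom (G\<lparr>carrier := A\<rparr>) D"
begin

lemma inflate2_transgression_coboundary:
  assumes trivial: "\<forall>z\<in>Z. \<theta> z = \<one>\<^bsub>D\<^esub>"
  shows "inflate2 (transgression_cocycle \<theta>) \<in> coboundaries2 QZ D"
proof -
  define g where "g x = inv\<^bsub>D\<^esub> \<theta> (A_part (coset_rep x))" for x
  have g_rcos: "g (Z #> h) = inv\<^bsub>D\<^esub> \<theta> (A_part h)" if h: "h \<in> S" for h
  proof -
    obtain z where z: "z \<in> Z" "coset_rep (Z #> h) = z \<otimes> h"
      using coset_rep_mem[OF G.rcos_self[OF S_carrier[OF h] subgroup_Z]] unfolding r_coset_def by blast
    then have "\<theta> (A_part (coset_rep (Z #> h))) = \<theta> z \<otimes>\<^bsub>D\<^esub> \<theta> (A_part h)"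
      using A_part_mult_A \<theta>_simps(2)[OF \<theta>] A_part_mem h Z_subset_A by auto
    then show ?thesis unfolding g_def using z(1) trivial \<theta>_simps(1)[OF \<theta>] A_part_mem h by simp
  qed
  have "g \<in> carrier QZ \<rightarrow> carrier D"
    using carrier_QZ g_rcos \<theta>_simps(1)[OF \<theta>] A_part_mem by auto
  moreover have "inflate2 (transgression_cocycle \<theta>) = coboundary2 QZ D g"
    unfolding inflate2_def coboundary2_def
  proof (rule restrict_ext)
    fix p assume "p \<in> carrier QZ \<times> carrier QZ"
    then obtain h1 h2 where h: "h1 \<in> S" "h2 \<in> S" "fst p = Z #> h1" "snd p = Z #> h2"
      using carrier_QZ by (auto simp: mem_Times_iff)
    have c: "\<theta> (A_part h1) \<in> carrier D" "\<theta> (A_part h2) \<in> carrier D"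
      "transgression_cocycle \<theta> (A #> h1, A #> h2) \<in> carrier D"
      using \<theta>_simps(1)[OF \<theta>] A_part_mem transgression_cocycle_closed[OF \<theta>] h rcos_in_QA by auto
    show "transgression_cocycle \<theta> (coset_proj G A (fst p), coset_proj G A (snd p))
        = g (fst p) \<otimes>\<^bsub>D\<^esub> g (snd p) \<otimes>\<^bsub>D\<^esub> inv\<^bsub>D\<^esub> g (fst p \<otimes>\<^bsub>QZ\<^esub> snd p)"
      unfolding h(3,4) mult_QZ rcos_mult[OF Z_normal h(1,2)] coset_proj_rcos[OF h(1)]
        coset_proj_rcos[OF h(2)] g_rcos[OF h(1)] g_rcos[OF h(2)] g_rcos[OF S_mult[OF h(1,2)]]
        A_part_hom_defect[OF \<theta> h(1,2)]
      using c by (simp add: D.m_ac D.inv_mult D.inv_cancel_ac)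
  qed
  ultimately show ?thesis unfolding coboundaries2_eq by blast
qed

lemma A_part_twisted_hom:
  assumes g: "g \<in> carrier QZ \<rightarrow> carrier D"
    and g_eq: "inflate2 (transgression_cocycle \<theta>) = coboundary2 QZ D g"
  shows "(\<lambda>h. \<theta> (A_part h) \<otimes>\<^bsub>D\<^esub> g (Z #> h)) \<in> hom (G\<lparr>carrier := S\<rparr>) D"
proof (rule homI)
  have g_closed: "g (Z #> h) \<in> carrier D" if "h \<in> S" for h using g rcos_in_QZ that by blast
  show "\<theta> (A_part h) \<otimes>\<^bsub>D\<^esub> g (Z #> h) \<in> carrier D" if "h \<in> carrier (G\<lparr>carrier := S\<rparr>)" for h
    using that g_closed \<theta>_simps(1)[OF \<theta>] A_part_mem by simp
  fix h1 h2 assume "h1 \<in> carrier (G\<lparr>carrier := S\<rparr>)" "h2 \<in> carrier (G\<lparr>carrier := S\<rparr>)"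
  then have h: "h1 \<in> S" "h2 \<in> S" by simp_all
  have "transgression_cocycle \<theta> (A #> h1, A #> h2) = inflate2 (transgression_cocycle \<theta>) (Z #> h1, Z #> h2)"
    unfolding inflate2_def using h rcos_in_QZ coset_proj_rcos by simp
  also have "\<dots> = g (Z #> h1) \<otimes>\<^bsub>D\<^esub> g (Z #> h2) \<otimes>\<^bsub>D\<^esub> inv\<^bsub>D\<^esub> g (Z #> (h1 \<otimes> h2))"
    unfolding g_eq coboundary2_def using h rcos_in_QZ mult_QZ rcos_mult[OF Z_normal] by simp
  finally have "transgression_cocycle \<theta> (A #> h1, A #> h2)
      = g (Z #> h1) \<otimes>\<^bsub>D\<^esub> g (Z #> h2) \<otimes>\<^bsub>D\<^esub> inv\<^bsub>D\<^esub> g (Z #> (h1 \<otimes> h2))" .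
  then show "\<theta> (A_part (h1 \<otimes>\<^bsub>G\<lparr>carrier := S\<rparr>\<^esub> h2)) \<otimes>\<^bsub>D\<^esub> g (Z #> h1 \<otimes>\<^bsub>G\<lparr>carrier := S\<rparr>\<^esub> h2)
      = \<theta> (A_part h1) \<otimes>\<^bsub>D\<^esub> g (Z #> h1) \<otimes>\<^bsub>D\<^esub> (\<theta> (A_part h2) \<otimes>\<^bsub>D\<^esub> g (Z #> h2))"
    using A_part_hom_defect[OF \<theta> h] h g_closed S_mult \<theta>_simps(1)[OF \<theta>] A_part_mem
    by (simp add: D.m_ac D.inv_cancel_ac)
qed

lemma trivial_on_Z_if_inflate2_coboundary:
  assumes "inflate2 (transgression_cocycle \<theta>) \<in> coboundaries2 QZ D"
  shows "\<forall>z\<in>Z. \<theta> z = \<one>\<^bsub>D\<^esub>"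
proof
  obtain g where g: "g \<in> carrier QZ \<rightarrow> carrier D"
    and g_eq: "inflate2 (transgression_cocycle \<theta>) = coboundary2 QZ D g"
    using assms unfolding coboundaries2_eq by blast
  define \<psi> where "\<psi> h = \<theta> (A_part h) \<otimes>\<^bsub>D\<^esub> g (Z #> h)" for h
  have \<psi>: "\<psi> \<in> hom (G\<lparr>carrier := S\<rparr>) D"
    unfolding \<psi>_def by (rule A_part_twisted_hom[OF g g_eq])
  fix z assume z: "z \<in> Z"
  have one: "\<one> \<in> S" using subgroup.one_closed[OF subgroup_S] .
  have "Z #> z = Z #> \<one>"
    using G.coset_join2[OF subgroup.mem_carrier[OF subgroup_Z z] subgroup_Z z]
      G.coset_mult_one subgroup.subset[OF subgroup_Z] by simp
  moreover have "z \<in> A" "g (Z #> \<one>) \<in> carrier D" using z Z_subset_A g rcos_in_QZ[OF one] by auto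
  ultimately have "\<psi> z = \<theta> z \<otimes>\<^bsub>D\<^esub> \<psi> \<one>"
    unfolding \<psi>_def using A_part_mult_A[of z \<one>] one A_carrier \<theta>_simps(1,2)[OF \<theta>] A_part_mem
    by (simp add: D.m_assoc)
  moreover have "\<psi> z = \<one>\<^bsub>D\<^esub>"
    using hom_derived_eq_one[OF G.is_group D.comm_group_axioms subgroup_S \<psi>] z Z_subset_derived by blast
  ultimately show "\<theta> z = \<one>\<^bsub>D\<^esub>"
    using hom_on_subgroupD(3)[OF G.is_group D.is_group subgroup_S \<psi>] \<theta>_simps(1)[OF \<theta>] z Z_subset_A
    by auto
qed

end

end

sublocale central_quotient \<subseteq> cohA: trivial_action "G\<lparr>carrier := S\<rparr> Mod A" D
  using QA_group D.comm_group_axioms by (simp add: trivial_action_def)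

sublocale central_quotient \<subseteq> cohZ: trivial_action "G\<lparr>carrier := S\<rparr> Mod Z" D
  using QZ_group D.comm_group_axioms by (simp add: trivial_action_def)

context central_quotient
begin

abbreviation "L \<equiv> infl_kernel G S A Z D"

lemma rcos_mem_infl_kernel_iff:
  assumes f: "f \<in> cocycles2 QA D"
  shows "coboundaries2 QA D #>\<^bsub>cochain2 QA D\<^esub> f \<in> L \<longleftrightarrow> inflate2 f \<in> coboundaries2 QZ D"
proof -
  have fc: "f \<in> carrier (cochain2 QA D)" using subgroup.mem_carrier[OF cohA.cocycles_subgroup f] .
  then have "inflate2 f \<in> carrier (cochain2 QZ D)" using inflate2_hom by (auto simp: hom_def)
  then have "coboundaries2 QZ D #>\<^bsub>cochain2 QZ D\<^esub> inflate2 f = coboundaries2 QZ D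
      \<longleftrightarrow> inflate2 f \<in> coboundaries2 QZ D"
    using group.coset_join1[OF cohZ.cochains_group _ _ cohZ.coboundaries_subgroup]
      group.coset_join2[OF cohZ.cochains_group _ cohZ.coboundaries_subgroup] by blast
  moreover have "coboundaries2 QA D #>\<^bsub>cochain2 QA D\<^esub> f \<in> carrier (H2 QA D)"
    unfolding cohA.carrier_H2 using f by (rule imageI)
  ultimately show ?thesis
    unfolding infl_kernel_def using inflation_rcos[OF fc] cohZ.one_H2 by simp
qed

lemma infl_kernel_subgroup: "subgroup L (H2 QA D)"
proof (rule group.subgroupI[OF cohA.H2_group])
  have cls: "\<exists>f\<in>cocycles2 QA D. c = coboundaries2 QA D #>\<^bsub>cochain2 QA D\<^esub> f
      \<and> inflate2 f \<in> coboundaries2 QZ D" if "c \<in> L" for c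
    using that rcos_mem_infl_kernel_iff unfolding infl_kernel_def cohA.carrier_H2 by auto
  have cc: "f \<in> carrier (cochain2 QA D)" if "f \<in> cocycles2 QA D" for f
    using subgroup.mem_carrier[OF cohA.cocycles_subgroup that] .
  interpret inf: group_hom "cochain2 QA D" "cochain2 QZ D" inflate2
    using inflate2_hom cohA.cochains_group cohZ.cochains_group
    by (simp add: group_hom_def group_hom_axioms_def)
  show "L \<subseteq> carrier (H2 QA D)" unfolding infl_kernel_def by blast
  have "coboundaries2 QA D #>\<^bsub>cochain2 QA D\<^esub> \<one>\<^bsub>cochain2 QA D\<^esub> \<in> L"
    using rcos_mem_infl_kernel_iff[OF subgroup.one_closed[OF cohA.cocycles_subgroup]]
      subgroup.one_closed[OF cohZ.coboundaries_subgroup] by simp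
  then show "L \<noteq> {}" by blast
  show "inv\<^bsub>H2 QA D\<^esub> c \<in> L" if "c \<in> L" for c
    using cls[OF that] cohA.inv_H2 rcos_mem_infl_kernel_iff inf.hom_inv cc
      subgroup.m_inv_closed[OF cohA.cocycles_subgroup] subgroup.m_inv_closed[OF cohZ.coboundaries_subgroup]
    by metis
  show "c \<otimes>\<^bsub>H2 QA D\<^esub> d \<in> L" if "c \<in> L" "d \<in> L" for c d
    using cls[OF that(1)] cls[OF that(2)] cohA.mult_H2 rcos_mem_infl_kernel_iff inf.hom_mult cc
      subgroup.m_closed[OF cohA.cocycles_subgroup] subgroup.m_closed[OF cohZ.coboundaries_subgroup]
    by metis
qed

definition transgression_class :: "('a \<Rightarrow> 'd) \<Rightarrow> ('a set \<times> 'a set \<Rightarrow> 'd) set" where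
  "transgression_class \<theta> = coboundaries2 QA D #>\<^bsub>cochain2 QA D\<^esub> transgression_cocycle \<theta>"

definition transgression :: "('a \<Rightarrow> 'd) \<Rightarrow> ('a set \<times> 'a set \<Rightarrow> 'd) set set" where
  "transgression \<theta> = L #>\<^bsub>H2 QA D\<^esub> transgression_class \<theta>"

lemma transgression_class_closed:
  "\<theta> \<in> hom (G\<lparr>carrier := A\<rparr>) D \<Longrightarrow> transgression_class \<theta> \<in> carrier (H2 QA D)"
  unfolding transgression_class_def cohA.carrier_H2 using transgression_cocycle_mem by (rule imageI)

lemma transgression_class_mult:
  assumes "\<theta>1 \<in> hom (G\<lparr>carrier := A\<rparr>) D" "\<theta>2 \<in> hom (G\<lparr>carrier := A\<rparr>) D"
  shows "transgression_class (\<lambda>a. \<theta>1 a \<otimes>\<^bsub>D\<^esub> \<theta>2 a) = transgression_class \<theta>1 \<otimes>\<^bsub>H2 QA D\<^esub> transgression_class \<theta>2"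
  unfolding transgression_class_def transgression_cocycle_mult
  using cohA.mult_H2[OF transgression_cocycle_mem[OF assms(1)] transgression_cocycle_mem[OF assms(2)]] ..

lemma transgression_class_mem_infl_kernel_iff:
  "\<theta> \<in> hom (G\<lparr>carrier := A\<rparr>) D \<Longrightarrow> transgression_class \<theta> \<in> L \<longleftrightarrow> (\<forall>z\<in>Z. \<theta> z = \<one>\<^bsub>D\<^esub>)"
  unfolding transgression_class_def rcos_mem_infl_kernel_iff[OF transgression_cocycle_mem]
  using inflate2_transgression_coboundary trivial_on_Z_if_inflate2_coboundary by blast

lemma transgression_closed:
  "\<theta> \<in> hom (G\<lparr>carrier := A\<rparr>) D \<Longrightarrow> transgression \<theta> \<in> carrier (H2 QA D Mod L)"
  unfolding transgression_def carrier_FactGroup using transgression_class_closed by (rule imageI)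

lemma transgression_mult:
  assumes "\<theta>1 \<in> hom (G\<lparr>carrier := A\<rparr>) D" "\<theta>2 \<in> hom (G\<lparr>carrier := A\<rparr>) D"
  shows "transgression (\<lambda>a. \<theta>1 a \<otimes>\<^bsub>D\<^esub> \<theta>2 a) = transgression \<theta>1 \<otimes>\<^bsub>H2 QA D Mod L\<^esub> transgression \<theta>2"
  unfolding transgression_def transgression_class_mult[OF assms]
  using normal.rcos_sum[OF comm_group.subgroup_imp_normal[OF cohA.H2_comm_group infl_kernel_subgroup]
      transgression_class_closed[OF assms(1)] transgression_class_closed[OF assms(2)]]
  by simp

lemma transgression_eq_iff:
  assumes \<theta>1: "\<theta>1 \<in> hom (G\<lparr>carrier := A\<rparr>) D" and \<theta>2: "\<theta>2 \<in> hom (G\<lparr>carrier := A\<rparr>) D"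
  shows "transgression \<theta>1 = transgression \<theta>2 \<longleftrightarrow> (\<forall>z\<in>Z. \<theta>1 z = \<theta>2 z)"
proof -
  interpret H: comm_group "H2 QA D" by (rule cohA.H2_comm_group)
  define q where "q a = \<theta>1 a \<otimes>\<^bsub>D\<^esub> inv\<^bsub>D\<^esub> \<theta>2 a" for a
  have q: "q \<in> hom (G\<lparr>carrier := A\<rparr>) D" unfolding q_def using D.hom_group_div[OF \<theta>1 \<theta>2] .
  note c1 = \<theta>_simps(1)[OF \<theta>1] and c2 = \<theta>_simps(1)[OF \<theta>2]
  have "transgression_class \<theta>1 = transgression_class (\<lambda>a. \<theta>2 a \<otimes>\<^bsub>D\<^esub> q a)"
    unfolding transgression_class_def using c1 c2
    by (intro arg_cong[where f = "\<lambda>f. _ #>\<^bsub>_\<^esub> f"] transgression_cocycle_cong)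
      (simp add: q_def D.inv_cancel_ac)
  also have "\<dots> = transgression_class \<theta>2 \<otimes>\<^bsub>H2 QA D\<^esub> transgression_class q"
    using transgression_class_mult[OF \<theta>2 q] .
  finally have "transgression_class \<theta>1 \<otimes>\<^bsub>H2 QA D\<^esub> inv\<^bsub>H2 QA D\<^esub> transgression_class \<theta>2
      = transgression_class q"
    using transgression_class_closed[OF \<theta>2] transgression_class_closed[OF q]
    by (simp add: H.m_ac H.inv_cancel_ac)
  then have "transgression \<theta>1 = transgression \<theta>2 \<longleftrightarrow> transgression_class q \<in> L"
    unfolding transgression_def
    using H.rcos_eq_iff[OF infl_kernel_subgroup] transgression_class_closed \<theta>1 \<theta>2 by simp
  also have "\<dots> \<longleftrightarrow> (\<forall>z\<in>Z. \<theta>1 z = \<theta>2 z)"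
    unfolding transgression_class_mem_infl_kernel_iff[OF q] q_def
  proof -
    have "\<theta>1 z \<in> carrier D" "\<theta>2 z \<in> carrier D" if "z \<in> Z" for z
      using c1 c2 Z_subset_A that by auto
    then show "(\<forall>z\<in>Z. \<theta>1 z \<otimes>\<^bsub>D\<^esub> inv\<^bsub>D\<^esub> \<theta>2 z = \<one>\<^bsub>D\<^esub>) \<longleftrightarrow> (\<forall>z\<in>Z. \<theta>1 z = \<theta>2 z)"
      by (simp add: D.inv_solve_right')
  qed
  finally show ?thesis .
qed

end

section \<open>Embedding Hom(Z, D)\<close>

lemma Hom_grp_embedding_via_restriction:
  assumes G: "group G" and A: "subgroup A G" "comm_group (G\<lparr>carrier := A\<rparr>)"
    and Z: "subgroup Z G" "Z \<subseteq> A" and D: "comm_group D" "divisible_group D"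
    and \<Phi>_closed: "\<And>\<theta>. \<theta> \<in> hom (G\<lparr>carrier := A\<rparr>) D \<Longrightarrow> \<Phi> \<theta> \<in> carrier B"
    and \<Phi>_mult: "\<And>\<theta>1 \<theta>2. \<theta>1 \<in> hom (G\<lparr>carrier := A\<rparr>) D \<Longrightarrow> \<theta>2 \<in> hom (G\<lparr>carrier := A\<rparr>) D
        \<Longrightarrow> \<Phi> (\<lambda>a. \<theta>1 a \<otimes>\<^bsub>D\<^esub> \<theta>2 a) = \<Phi> \<theta>1 \<otimes>\<^bsub>B\<^esub> \<Phi> \<theta>2"
    and \<Phi>_eq_iff: "\<And>\<theta>1 \<theta>2. \<theta>1 \<in> hom (G\<lparr>carrier := A\<rparr>) D \<Longrightarrow> \<theta>2 \<in> hom (G\<lparr>carrier := A\<rparr>) D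
        \<Longrightarrow> \<Phi> \<theta>1 = \<Phi> \<theta>2 \<longleftrightarrow> (\<forall>z\<in>Z. \<theta>1 z = \<theta>2 z)"
  shows "\<exists>\<phi>. \<phi> \<in> hom (Hom_grp G Z D) B \<and> inj_on \<phi> (carrier (Hom_grp G Z D))"
proof -
  interpret G: group G by fact
  interpret D: comm_group D by fact
  obtain ext where ext: "\<And>\<chi>. \<chi> \<in> hom (G\<lparr>carrier := Z\<rparr>) D \<Longrightarrow> ext \<chi> \<in> hom (G\<lparr>carrier := A\<rparr>) D"
    "\<And>\<chi> z. \<chi> \<in> hom (G\<lparr>carrier := Z\<rparr>) D \<Longrightarrow> z \<in> Z \<Longrightarrow> ext \<chi> z = \<chi> z"
    using divisible_hom_extension_map[OF A(2) G.subgroup_incl[OF Z(1) A(1) Z(2)] D] by auto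
  have carrier_Hom: "carrier (Hom_grp G Z D) = hom (G\<lparr>carrier := Z\<rparr>) D \<inter> extensional Z"
    and mult_Hom: "\<chi>1 \<otimes>\<^bsub>Hom_grp G Z D\<^esub> \<chi>2 = (\<lambda>z\<in>Z. \<chi>1 z \<otimes>\<^bsub>D\<^esub> \<chi>2 z)" for \<chi>1 \<chi>2
    unfolding Hom_grp_def by simp_all
  have "(\<lambda>\<chi>. \<Phi> (ext \<chi>)) \<in> hom (Hom_grp G Z D) B"
  proof (rule homI)
    show "\<Phi> (ext \<chi>) \<in> carrier B" if "\<chi> \<in> carrier (Hom_grp G Z D)" for \<chi>
      using that \<Phi>_closed ext(1) carrier_Hom by auto
    fix \<chi>1 \<chi>2 assume "\<chi>1 \<in> carrier (Hom_grp G Z D)" "\<chi>2 \<in> carrier (Hom_grp G Z D)"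
    then have \<chi>: "\<chi>1 \<in> hom (G\<lparr>carrier := Z\<rparr>) D" "\<chi>2 \<in> hom (G\<lparr>carrier := Z\<rparr>) D"
      using carrier_Hom by auto
    have \<chi>12: "\<chi>1 \<otimes>\<^bsub>Hom_grp G Z D\<^esub> \<chi>2 \<in> hom (G\<lparr>carrier := Z\<rparr>) D"
      unfolding mult_Hom using group.hom_restrict[OF G.subgroup_imp_group[OF Z(1)] D.hom_group_mult[OF \<chi>]]
      by simp
    have "\<Phi> (ext (\<chi>1 \<otimes>\<^bsub>Hom_grp G Z D\<^esub> \<chi>2)) = \<Phi> (\<lambda>a. ext \<chi>1 a \<otimes>\<^bsub>D\<^esub> ext \<chi>2 a)"
      using \<Phi>_eq_iff[OF ext(1)[OF \<chi>12] D.hom_group_mult[OF ext(1)[OF \<chi>(1)] ext(1)[OF \<chi>(2)]]]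
        ext(2) \<chi> \<chi>12 by (simp add: mult_Hom)
    also have "\<dots> = \<Phi> (ext \<chi>1) \<otimes>\<^bsub>B\<^esub> \<Phi> (ext \<chi>2)"
      using \<Phi>_mult ext(1) \<chi> by blast
    finally show "\<Phi> (ext (\<chi>1 \<otimes>\<^bsub>Hom_grp G Z D\<^esub> \<chi>2)) = \<Phi> (ext \<chi>1) \<otimes>\<^bsub>B\<^esub> \<Phi> (ext \<chi>2)" .
  qed
  moreover have "inj_on (\<lambda>\<chi>. \<Phi> (ext \<chi>)) (carrier (Hom_grp G Z D))"
  proof (rule inj_onI)
    fix \<chi>1 \<chi>2 assume \<chi>: "\<chi>1 \<in> carrier (Hom_grp G Z D)" "\<chi>2 \<in> carrier (Hom_grp G Z D)"
      and "\<Phi> (ext \<chi>1) = \<Phi> (ext \<chi>2)"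
    then have "\<chi>1 z = \<chi>2 z" if "z \<in> Z" for z
      using \<Phi>_eq_iff ext carrier_Hom that by auto
    then show "\<chi>1 = \<chi>2" using \<chi> carrier_Hom by (auto intro: extensionalityI)
  qed
  ultimately show ?thesis by blast
qed

theorem theorem3p6:
  fixes G :: "('a, 'm) monoid_scheme" and D :: "('d, 'n) monoid_scheme"
    and H K :: "'a set"
  assumes "group G"
    and "H \<lhd> G" and "K \<lhd> G"
    and "H <#>\<^bsub>G\<^esub> K = carrier G"
    and "\<forall>h\<in>H. \<forall>k\<in>K. h \<otimes>\<^bsub>G\<^esub> k = k \<otimes>\<^bsub>G\<^esub> h"
    and "comm_group D" and "divisible_group D"
  shows "let A = H \<inter> K; Z = derived G H \<inter> derived G K;
             L = infl_kernel G H A Z D; M = infl_kernel G K A Z D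
         in \<exists>\<phi>. \<phi> \<in> hom (Hom_grp G Z D)
                     ((H2 (G\<lparr>carrier := H\<rparr> Mod A) D Mod L) \<times>\<times> (H2 (G\<lparr>carrier := K\<rparr> Mod A) D Mod M))
                \<and> inj_on \<phi> (carrier (Hom_grp G Z D))"
proof -
  interpret G: group G by fact
  define A where "A = H \<inter> K"
  define Z where "Z = derived G H \<inter> derived G K"
  have H: "subgroup H G" and K: "subgroup K G" using assms(2,3) normal_imp_subgroup by auto
  have A: "subgroup A G" unfolding A_def using G.subgroups_Inter_pair[OF H K] .
  have Z: "subgroup Z G" "Z \<subseteq> A"
    unfolding Z_def A_def
    using G.subgroups_Inter_pair[OF G.derived_is_subgroup G.derived_is_subgroup]
      subgroup.subset[OF H] subgroup.subset[OF K]
      G.derived_incl[OF subset_refl H] G.derived_incl[OF subset_refl K] by auto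
  interpret cH: central_quotient G D H A Z
    using assms(5-6) H A Z unfolding central_quotient_def central_quotient_axioms_def A_def Z_def
    by (auto simp: comm_group.axioms(2))
  interpret cK: central_quotient G D K A Z
    using assms(5-6) K A Z unfolding central_quotient_def central_quotient_axioms_def A_def Z_def
    by (auto simp: comm_group.axioms(2))
  have "comm_group (G\<lparr>carrier := A\<rparr>)"
    using G.subgroup_imp_group[OF A] assms(5) subgroup.mem_carrier[OF A]
    by (intro group.group_comm_groupI) (auto simp: A_def)
  then have "\<exists>\<phi>. \<phi> \<in> hom (Hom_grp G Z D) ((H2 cH.QA D Mod cH.L) \<times>\<times> (H2 cK.QA D Mod cK.L))
      \<and> inj_on \<phi> (carrier (Hom_grp G Z D))"
    by (rule Hom_grp_embedding_via_restriction[OF assms(1) A _ Z assms(6,7),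
        where \<Phi> = "\<lambda>\<theta>. (cH.transgression \<theta>, cK.transgression \<theta>)"])
      (simp_all add: cH.transgression_closed cK.transgression_closed cH.transgression_mult
        cK.transgression_mult cH.transgression_eq_iff cK.transgression_eq_iff)
  then show ?thesis unfolding A_def Z_def by simp
qed

end
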